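(* For every $(\varepsilon,\delta)\in(0,1)\times[0,\delta_0]$, $$\mathcal R^\ast(\varepsilon,\delta|p_{X_1X_2},p_{K_1K_2})\subseteq\mathcal R^{(\rm out)}(p_{X_1X_2},p_{K_1K_2}),$$ where $\mathcal R^{(\rm out)}(p_{X_1X_2},p_{K_1K_2}):=\mathcal R_{\rm sw}(p_{X_1X_2})$ if $\mathcal R_{\rm key}(p_{K_1K_2})\cap\mathcal R_{\rm sw}(p_{X_1X_2})\neq\emptyset$, and $:=\emptyset$ otherwise.
   Context: All logarithms are base 2. $\mathcal X_1,\mathcal X_2$ are finite fields. $(X_1,X_2)$ has joint pmf $p_{X_1X_2}$ on $\mathcal X_1\times\mathcal X_2$ and $(K_1,K_2)$ has joint pmf $p_{K_1K_2}$ on $\mathcal X_1\times\mathcal X_2$. For block length $n$, $(\mathbf X_1,\mathbf X_2)$ is i.i.d. with law $p^n_{X_1X_2}$ (source), $(\mathbf K_1,\mathbf K_2)$ is i.i.d. with law $p^n_{K_1K_2}$ (keys), and the keys are independent of the sources. A distributed source encryption system at block length $n$ consists of finite sets $\mathcal C_i^{(n)}$, encryption maps $\Phi_i^{(n)}:\mathcal X_i^n\times\mathcal X_i^n\to\mathcal C_i^{(n)}$ (key, plaintext) and a decryption map $\Psi^{(n)}:\mathcal X_1^n\times\mathcal X_2^n\times\mathcal C_1^{(n)}\times\mathcal C_2^{(n)}\to\mathcal X_1^n\times\mathcal X_2^n$, such that there exist maps $\phi_i^{(n)}:\mathcal X_i^n\to\mathcal M_i^{(n)}$ (finite $\mathcal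 M_i^{(n)}$) and $\psi^{(n)}$ with $\Psi^{(n)}(\mathbf k_1,\mathbf k_2,\Phi_1^{(n)}(\mathbf k_1,\mathbf x_1),\Phi_2^{(n)}(\mathbf k_2,\mathbf x_2))=\psi^{(n)}(\phi_1^{(n)}(\mathbf x_1),\phi_2^{(n)}(\mathbf x_2))$ for all keys and plaintexts. Ciphertexts: $C_i^{(n)}=\Phi_i^{(n)}(\mathbf K_i,\mathbf X_i)$. Correct decoding set $\mathcal D^{(n)}:=\{(\mathbf x_1,\mathbf x_2):\psi^{(n)}(\phi_1^{(n)}(\mathbf x_1),\phi_2^{(n)}(\mathbf x_2))=(\mathbf x_1,\mathbf x_2)\}$; error probability $p_{\rm e}:=\Pr[(\mathbf X_1,\mathbf X_2)\notin\mathcal D^{(n)}]$. Fix a constant $\delta_0>0$. For $(\varepsilon,\delta)\in(0,1)\times[0,\delta_0]$, $(R_1,R_2)$ is an $(\varepsilon,\delta)$-reliable and secure rate pair if there is a sequence of systems $\{(\Phi_1^{(n)},\Phi_2^{(n)},\Psi^{(n)})\}_{n\ge1}$ such that for every $\gamma>0$ there is $n_0$ with, for all $n\ge n_0$: $\frac1n\log|\mathcal C_i^{(n)}|\le R_i+\gamma$ ($i=1,2$), $p_{\rm e}\le\varepsilon$, and $I(C_1^{(n)}C_2^{(n)};\mathbf X_1\mathbf X_2)\le\delta$. $\mathcal R^\ast(\varepsilon,\delta|p_{X_1X_2},p_{K_1K_2})$ is the set of such pairs. $\mathcal R_{\rm sw}(p_{X_1X_2}):=\{(R_1,R_2):R_1\ge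 H(X_1|X_2),R_2\ge H(X_2|X_1),R_1+R_2\ge H(X_1X_2)\}$, $\mathcal R_{\rm key}(p_{K_1K_2}):=\{(R_1,R_2):R_1\le H(K_1),R_2\le H(K_2),R_1+R_2\le H(K_1K_2)\}$. *)

theory Defs
  imports "HOL-Probability.Probability"
begin

definition ent :: "'a pmf \<Rightarrow> real" where
  "ent P = - (\<Sum>x\<in>set_pmf P. pmf P x * log 2 (pmf P x))"

definition mutinf :: "('u \<times> 'v) pmf \<Rightarrow> real" where
  "mutinf J = (\<Sum>z\<in>set_pmf J. pmf J z *
      log 2 (pmf J z / (pmf (map_pmf fst J) (fst z) * pmf (map_pmf snd J) (snd z))))"

fun iid :: "nat \<Rightarrow> 'a pmf \<Rightarrow> 'a list pmf" where
  "iid 0 P = return_pmf []"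
| "iid (Suc n) P = do { x \<leftarrow> P; xs \<leftarrow> iid n P; return_pmf (x # xs) }"

(* Joint law of ((C1,C2),(X1,X2)) at block length n: sources i.i.d. pX (pairs),
   keys i.i.d. pK, independent; C_i = Phi_i(K_i, X_i). *)
definition cipher_joint ::
  "nat \<Rightarrow> ('a \<times> 'b) pmf \<Rightarrow> ('a \<times> 'b) pmf \<Rightarrow> ('a list \<Rightarrow> 'a list \<Rightarrow> 'c1)
     \<Rightarrow> ('b list \<Rightarrow> 'b list \<Rightarrow> 'c2) \<Rightarrow> (('c1 \<times> 'c2) \<times> ('a list \<times> 'b list)) pmf" where
  "cipher_joint n pX pK Phi1 Phi2 = do {
      xs \<leftarrow> iid n pX; ks \<leftarrow> iid n pK;
      return_pmf ((Phi1 (map fst ks) (map fst xs), Phi2 (map snd ks) (map snd xs)),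
                  (map fst xs, map snd xs)) }"

definition err_prob ::
  "nat \<Rightarrow> ('a \<times> 'b) pmf \<Rightarrow> ('a list \<Rightarrow> 'm1) \<Rightarrow> ('b list \<Rightarrow> 'm2)
     \<Rightarrow> ('m1 \<Rightarrow> 'm2 \<Rightarrow> 'a list \<times> 'b list) \<Rightarrow> real" where
  "err_prob n pX phi1 phi2 psi =
     measure_pmf.prob (map_pmf (\<lambda>xs. (map fst xs, map snd xs)) (iid n pX))
       {(x1, x2). psi (phi1 x1) (phi2 x2) \<noteq> (x1, x2)}"

(* A distributed source encryption system at block length n. Ciphertext and message
   alphabets are finite sets of naturals (w.l.o.g., any finite set can be encoded). *)
definition is_system ::
  "nat \<Rightarrow> nat set \<Rightarrow> nat set \<Rightarrow> ('a list \<Rightarrow> 'a list \<Rightarrow> nat) \<Rightarrow> ('b list \<Rightarrow> 'b list \<Rightarrow> nat)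
     \<Rightarrow> ('a list \<Rightarrow> 'b list \<Rightarrow> nat \<Rightarrow> nat \<Rightarrow> 'a list \<times> 'b list)
     \<Rightarrow> ('a list \<Rightarrow> nat) \<Rightarrow> ('b list \<Rightarrow> nat) \<Rightarrow> (nat \<Rightarrow> nat \<Rightarrow> 'a list \<times> 'b list) \<Rightarrow> bool" where
  "is_system n C1 C2 Phi1 Phi2 Psi phi1 phi2 psi \<longleftrightarrow>
     finite C1 \<and> finite C2 \<and>
     (\<forall>k x. length k = n \<and> length x = n \<longrightarrow> Phi1 k x \<in> C1) \<and>
     (\<forall>k x. length k = n \<and> length x = n \<longrightarrow> Phi2 k x \<in> C2) \<and>
     (\<forall>k1 k2 x1 x2. length k1 = n \<and> length k2 = n \<and> length x1 = n \<and> length x2 = n \<longrightarrow>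
        Psi k1 k2 (Phi1 k1 x1) (Phi2 k2 x2) = psi (phi1 x1) (phi2 x2))"

definition reliable_secure_region ::
  "real \<Rightarrow> real \<Rightarrow> ('a \<times> 'b) pmf \<Rightarrow> ('a \<times> 'b) pmf \<Rightarrow> (real \<times> real) set" where
  "reliable_secure_region eps del pX pK = {(R1, R2).
     \<exists>(C1 :: nat \<Rightarrow> nat set) (C2 :: nat \<Rightarrow> nat set)
      (Phi1 :: nat \<Rightarrow> 'a list \<Rightarrow> 'a list \<Rightarrow> nat) (Phi2 :: nat \<Rightarrow> 'b list \<Rightarrow> 'b list \<Rightarrow> nat)
      (Psi :: nat \<Rightarrow> 'a list \<Rightarrow> 'b list \<Rightarrow> nat \<Rightarrow> nat \<Rightarrow> 'a list \<times> 'b list)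
      (phi1 :: nat \<Rightarrow> 'a list \<Rightarrow> nat) (phi2 :: nat \<Rightarrow> 'b list \<Rightarrow> nat)
      (psi :: nat \<Rightarrow> nat \<Rightarrow> nat \<Rightarrow> 'a list \<times> 'b list).
       (\<forall>n\<ge>1. is_system n (C1 n) (C2 n) (Phi1 n) (Phi2 n) (Psi n) (phi1 n) (phi2 n) (psi n)) \<and>
       (\<forall>\<gamma>>0. \<exists>n0. \<forall>n\<ge>n0. n \<ge> 1 \<longrightarrow>
          log 2 (real (card (C1 n))) / real n \<le> R1 + \<gamma> \<and>
          log 2 (real (card (C2 n))) / real n \<le> R2 + \<gamma> \<and>
          err_prob n pX (phi1 n) (phi2 n) (psi n) \<le> eps \<and>
          mutinf (cipher_joint n pX pK (Phi1 n) (Phi2 n)) \<le> del)}"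

definition R_sw :: "('a \<times> 'b) pmf \<Rightarrow> (real \<times> real) set" where
  "R_sw pX = {(R1, R2).
     R1 \<ge> ent pX - ent (map_pmf snd pX) \<and>
     R2 \<ge> ent pX - ent (map_pmf fst pX) \<and>
     R1 + R2 \<ge> ent pX}"

definition R_key :: "('a \<times> 'b) pmf \<Rightarrow> (real \<times> real) set" where
  "R_key pK = {(R1, R2).
     R1 \<le> ent (map_pmf fst pK) \<and> R2 \<le> ent (map_pmf snd pK) \<and> R1 + R2 \<le> ent pK}"

definition R_out :: "('a \<times> 'b) pmf \<Rightarrow> ('a \<times> 'b) pmf \<Rightarrow> (real \<times> real) set" where
  "R_out pX pK = (if R_key pK \<inter> R_sw pX \<noteq> {} then R_sw pX else {})"

end

theory Submission
  imports Defs
begin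

text \<open>
  Both halves of the outer bound are strong converses driven by Chernoff estimates for products
  along i.i.d. sequences. Factor the source law as \<open>p = w \<cdot> g\<close> and let \<open>H = E[-log g]\<close>: typical
  sequences have \<open>g\<close>-probability about \<open>2^(-n H)\<close>, so a set of probability at least \<open>1 - \<epsilon>\<close> has
  \<open>w\<close>-weight about \<open>2^(n H)\<close> at least. For a fixed key, encryption is injective on the correctly
  decoded plaintexts, so the ciphertext alphabets bound these weights; taking for \<open>g\<close> the two
  conditional laws and the joint law gives \<open>R_sw\<close>.

  Likewise a ciphertext and a key determine a decodable plaintext, so a ciphertext is compatible
  with at most \<open>1/\<tau>\<close> units of weight through keys of probability at least \<open>\<tau>\<close>. If a key entropy
  \<open>H_K\<close> were below the corresponding \<open>H\<close>, then with probability bounded away from zero the ciphertext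
  would reveal about \<open>n (H - H_K)\<close> bits, and the mutual information would grow linearly in \<open>n\<close>
  instead of staying below \<open>\<delta>\<close>. Hence \<open>H(K1) \<ge> H(X1|X2)\<close>, \<open>H(K2) \<ge> H(X2|X1)\<close> and
  \<open>H(K1 K2) \<ge> H(X1 X2)\<close>, which with subadditivity of entropy produce a point of \<open>R_key \<inter> R_sw\<close>.
\<close>

section \<open>I.i.d. sequences\<close>

definition lists_of_length :: "nat \<Rightarrow> 'z list set" where
  "lists_of_length n = {zs. length zs = n}"

lemma finite_lists_of_length [simp]: "finite (lists_of_length n :: 'z::finite list set)"
  using finite_lists_length_eq[of "UNIV :: 'z set" n] by (simp add: lists_of_length_def)

lemma sum_lists_of_length_Suc:
  fixes F :: "'z::finite list \<Rightarrow> 'r::comm_monoid_add"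
  shows "(\<Sum>zs\<in>lists_of_length (Suc n). F zs) = (\<Sum>z\<in>UNIV. \<Sum>zs\<in>lists_of_length n. F (z # zs))"
proof -
  have eq: "lists_of_length (Suc n) = case_prod (#) ` (UNIV \<times> lists_of_length n)"
    by (auto simp: lists_of_length_def image_iff length_Suc_conv)
  have inj: "inj_on (case_prod (#)) (UNIV \<times> (lists_of_length n :: 'z list set))"
    by (auto simp: inj_on_def)
  show ?thesis
    unfolding eq sum.reindex[OF inj] by (simp add: sum.cartesian_product comp_def case_prod_beta)
qed

lemma sum_prod_list_lists_of_length:
  fixes f :: "'z::finite \<Rightarrow> real"
  shows "(\<Sum>zs\<in>lists_of_length n. prod_list (map f zs)) = (\<Sum>z\<in>UNIV. f z) ^ n"
proof (induction n)
  case 0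
  have "lists_of_length 0 = {[] :: 'z list}" by (auto simp: lists_of_length_def)
  then show ?case by simp
next
  case (Suc n)
  then show ?case
    by (simp add: sum_lists_of_length_Suc sum_distrib_left[symmetric] sum_distrib_right[symmetric])
qed

lemma sum_prod_list_pmf_lists_of_length:
  "(\<Sum>zs\<in>lists_of_length n. prod_list (map (pmf (P :: 'z::finite pmf)) zs)) = 1"
  by (simp add: sum_prod_list_lists_of_length sum_pmf_eq_1)

lemma prod_list_map_mult:
  "prod_list (map (\<lambda>z. f z * g z) zs) = prod_list (map f zs) * (prod_list (map g zs) :: 'r::comm_monoid_mult)"
  by (induction zs) (simp_all add: ac_simps)

lemma prod_list_powr:
  assumes "\<forall>z. 0 \<le> (g z :: real)"
  shows "prod_list (map (\<lambda>z. g z powr t) zs) = prod_list (map g zs) powr t"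
  using assms by (induction zs) (auto simp: powr_mult prod_list_nonneg)

lemma prod_list_mult_powr:
  "prod_list (map (\<lambda>z. g z * 2 powr c) zs) = prod_list (map g zs) * 2 powr (c * real (length zs))"
  by (induction zs) (auto simp: powr_add algebra_simps)

lemma inj_map_fst_snd: "inj (\<lambda>zs. (map fst zs, map snd zs))"
  by (rule injI) (metis prod.inject zip_map_fst_snd)

lemma iid_Suc_eq_pair_pmf: "iid (Suc n) P = map_pmf (case_prod (#)) (pair_pmf P (iid n P))"
  by (simp add: pair_pmf_def map_pmf_def bind_assoc_pmf bind_return_pmf)

lemma pmf_iid: "pmf (iid n P) zs = (if length zs = n then prod_list (map (pmf P) zs) else 0)"
proof (induction n arbitrary: zs)
  case 0
  then show ?case by (cases zs) auto
next
  case (Suc n)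
  have inj: "inj (case_prod (#) :: 'a \<times> 'a list \<Rightarrow> 'a list)" by (auto simp: inj_def)
  show ?case
  proof (cases zs)
    case Nil
    have "[] \<notin> set_pmf (iid (Suc n) P)" by (auto simp only: iid_Suc_eq_pair_pmf set_map_pmf)
    then show ?thesis using Nil by (simp del: iid.simps add: set_pmf_iff)
  next
    case (Cons z zs')
    have "pmf (iid (Suc n) P) zs = pmf (pair_pmf P (iid n P)) (z, zs')"
      unfolding iid_Suc_eq_pair_pmf Cons using pmf_map_inj'[OF inj, of _ "(z, zs')"] by simp
    then show ?thesis using Suc[of zs'] Cons by (simp add: pmf_pair)
  qed
qed

lemma iid_map_pmf: "iid n (map_pmf f P) = map_pmf (map f) (iid n P)"
proof (induction n)
  case (Suc n)
  have "iid (Suc n) (map_pmf f P) = map_pmf (case_prod (#)) (map_pmf (map_prod f (map f)) (pair_pmf P (iid n P)))"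
    unfolding iid_Suc_eq_pair_pmf Suc map_pair[symmetric] by (simp add: map_prod_def)
  then show ?case
    by (simp only: iid_Suc_eq_pair_pmf pmf.map_comp) (simp add: comp_def case_prod_beta)
qed simp

lemma set_pmf_iid: "set_pmf (iid n P) \<subseteq> lists_of_length n"
  by (auto simp: set_pmf_iff pmf_iid lists_of_length_def split: if_splits)

lemma prob_iid:
  fixes P :: "'z::finite pmf"
  shows "measure_pmf.prob (iid n P) S = (\<Sum>zs\<in>lists_of_length n \<inter> S. prod_list (map (pmf P) zs))"
proof -
  have "measure_pmf.prob (iid n P) S = measure_pmf.prob (iid n P) (lists_of_length n \<inter> S)"
    using set_pmf_iid[of n P] by (intro measure_eq_AE) (auto simp: AE_measure_pmf_iff)
  also have "\<dots> = (\<Sum>zs\<in>lists_of_length n \<inter> S. pmf (iid n P) zs)"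
    by (simp add: measure_measure_pmf_finite)
  also have "\<dots> = (\<Sum>zs\<in>lists_of_length n \<inter> S. prod_list (map (pmf P) zs))"
    by (rule sum.cong) (auto simp: pmf_iid lists_of_length_def)
  finally show ?thesis .
qed

lemma prob_iid_le_weight:
  fixes P :: "'z::finite pmf"
  assumes fac: "\<forall>z. pmf P z = w z * g z" and w0: "\<forall>z. 0 \<le> w z"
    and bound: "\<forall>zs\<in>lists_of_length n \<inter> U. prod_list (map g zs) \<le> \<sigma>"
  shows "measure_pmf.prob (iid n P) U \<le> \<sigma> * (\<Sum>zs\<in>lists_of_length n \<inter> U. prod_list (map w zs))"
proof -
  have "prod_list (map (pmf P) zs) \<le> \<sigma> * prod_list (map w zs)" if "zs \<in> lists_of_length n \<inter> U" for zs
  proof -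
    have "pmf P = (\<lambda>z. w z * g z)" using fac by (simp add: fun_eq_iff)
    then have "prod_list (map (pmf P) zs) = prod_list (map w zs) * prod_list (map g zs)"
      by (simp add: prod_list_map_mult)
    also have "\<dots> \<le> prod_list (map w zs) * \<sigma>"
      using bound that w0 by (intro mult_left_mono) (auto intro!: prod_list_nonneg)
    finally show ?thesis by (simp add: mult.commute)
  qed
  then show ?thesis
    unfolding prob_iid sum_distrib_left by (intro sum_mono) auto
qed

lemma card_heavy_lists_le:
  fixes P :: "'z::finite pmf"
  assumes "0 < \<tau>"
  shows "real (card {zs \<in> lists_of_length n. \<tau> \<le> prod_list (map (pmf P) zs)}) \<le> 1 / \<tau>"
proof -
  let ?H = "{zs \<in> lists_of_length n. \<tau> \<le> prod_list (map (pmf P) zs)}"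
  have "real (card ?H) * \<tau> = (\<Sum>zs\<in>?H. \<tau>)" by simp
  also have "\<dots> \<le> (\<Sum>zs\<in>?H. prod_list (map (pmf P) zs))" by (rule sum_mono) auto
  also have "\<dots> \<le> (\<Sum>zs\<in>lists_of_length n. prod_list (map (pmf P) zs))"
    by (rule sum_mono2) (auto intro!: prod_list_nonneg)
  also have "\<dots> = 1" by (rule sum_prod_list_pmf_lists_of_length)
  finally show ?thesis using assms by (simp add: field_simps)
qed

lemma sum_prod_pmf_snd_le:
  fixes Q :: "'b::finite pmf" and U :: "('a::finite \<times> 'b) list set"
  assumes slice: "\<forall>ys\<in>lists_of_length n. real (card {xs \<in> lists_of_length n. zip xs ys \<in> U}) \<le> N"
  shows "(\<Sum>zs\<in>lists_of_length n \<inter> U. prod_list (map (\<lambda>z. pmf Q (snd z)) zs)) \<le> N"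
proof -
  let ?S = "SIGMA ys:lists_of_length n. {xs \<in> lists_of_length n. zip xs ys \<in> U}"
  have "bij_betw (\<lambda>zs. (map snd zs, map fst zs)) (lists_of_length n \<inter> U) ?S"
  proof (rule bij_betw_imageI)
    show "inj_on (\<lambda>zs. (map snd zs, map fst zs)) (lists_of_length n \<inter> U)"
      using inj_map_fst_snd by (auto simp: inj_on_def inj_def)
    show "(\<lambda>zs. (map snd zs, map fst zs)) ` (lists_of_length n \<inter> U) = ?S"
    proof
      show "(\<lambda>zs. (map snd zs, map fst zs)) ` (lists_of_length n \<inter> U) \<subseteq> ?S"
        by (auto simp: lists_of_length_def zip_map_fst_snd)
      show "?S \<subseteq> (\<lambda>zs. (map snd zs, map fst zs)) ` (lists_of_length n \<inter> U)"
      proof clarify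
        fix ys xs assume "ys \<in> lists_of_length n" "xs \<in> lists_of_length n" "zip xs ys \<in> U"
        then show "(ys, xs) \<in> (\<lambda>zs. (map snd zs, map fst zs)) ` (lists_of_length n \<inter> U)"
          by (intro image_eqI[of _ _ "zip xs ys"]) (auto simp: lists_of_length_def)
      qed
    qed
  qed
  then have "(\<Sum>zs\<in>lists_of_length n \<inter> U. prod_list (map (\<lambda>z. pmf Q (snd z)) zs))
      = (\<Sum>(ys, xs)\<in>?S. prod_list (map (pmf Q) ys))"
    by (subst sum.reindex_bij_betw[symmetric]) (auto simp: comp_def)
  also have "\<dots> = (\<Sum>ys\<in>lists_of_length n.
      real (card {xs \<in> lists_of_length n. zip xs ys \<in> U}) * prod_list (map (pmf Q) ys))"
    by (subst sum.Sigma[symmetric]) auto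
  also have "\<dots> \<le> (\<Sum>ys\<in>lists_of_length n. N * prod_list (map (pmf Q) ys))"
    using slice by (intro sum_mono mult_right_mono) (auto intro!: prod_list_nonneg)
  also have "\<dots> = N" by (simp add: sum_distrib_left[symmetric] sum_prod_list_pmf_lists_of_length)
  finally show ?thesis .
qed

section \<open>Chernoff bounds\<close>

text \<open>The moment generating function of \<open>ln (g Z)\<close>, and \<open>E[-log g(Z)]\<close>, which is the entropy
  for \<open>g = pmf P\<close> and a conditional entropy when \<open>g\<close> is a conditional pmf.\<close>

definition mgf_log :: "'z pmf \<Rightarrow> ('z \<Rightarrow> real) \<Rightarrow> real \<Rightarrow> real" where
  "mgf_log P g t = (\<Sum>z\<in>UNIV. pmf P z * g z powr t)"

definition log_loss :: "'z pmf \<Rightarrow> ('z \<Rightarrow> real) \<Rightarrow> real" where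
  "log_loss P g = - (\<Sum>z\<in>UNIV. pmf P z * log 2 (g z))"

lemma prob_iid_le_mgf_log_power:
  fixes P :: "'z::finite pmf"
  assumes g0: "\<forall>z. 0 \<le> g z"
    and A: "\<And>zs. zs \<in> A \<Longrightarrow> \<forall>z\<in>set zs. 0 < pmf P z \<Longrightarrow> 1 \<le> prod_list (map g zs) powr t"
  shows "measure_pmf.prob (iid n P) A \<le> mgf_log P g t ^ n"
proof -
  have "prod_list (map (pmf P) zs) \<le> prod_list (map (\<lambda>z. pmf P z * g z powr t) zs)" if "zs \<in> A" for zs
  proof (cases "\<forall>z\<in>set zs. 0 < pmf P z")
    case True
    have "prod_list (map (pmf P) zs) * 1 \<le> prod_list (map (pmf P) zs) * prod_list (map g zs) powr t"
      using A[OF that True] by (intro mult_left_mono) (auto intro!: prod_list_nonneg)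
    also have "\<dots> = prod_list (map (\<lambda>z. pmf P z * g z powr t) zs)"
      by (simp only: prod_list_powr[OF g0, symmetric] prod_list_map_mult)
    finally show ?thesis by simp
  next
    case False
    then have "prod_list (map (pmf P) zs) = 0"
      by (auto simp: prod_list_zero_iff order_less_le)
    then show ?thesis by (auto intro!: prod_list_nonneg)
  qed
  then have "measure_pmf.prob (iid n P) A
      \<le> (\<Sum>zs\<in>lists_of_length n \<inter> A. prod_list (map (\<lambda>z. pmf P z * g z powr t) zs))"
    unfolding prob_iid by (intro sum_mono) auto
  also have "\<dots> \<le> (\<Sum>zs\<in>lists_of_length n. prod_list (map (\<lambda>z. pmf P z * g z powr t) zs))"
    by (intro sum_mono2) (auto intro!: prod_list_nonneg)
  finally show ?thesis
    by (simp add: sum_prod_list_lists_of_length mgf_log_def)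
qed

lemma mgf_log_0:
  fixes P :: "'z::finite pmf"
  assumes "\<forall>z. 0 < pmf P z \<longrightarrow> 0 < g z"
  shows "mgf_log P g 0 = 1"
proof -
  have "mgf_log P g 0 = (\<Sum>z\<in>UNIV. pmf P z)"
    unfolding mgf_log_def using assms by (intro sum.cong) (auto simp: order_less_le)
  then show ?thesis by (simp add: sum_pmf_eq_1)
qed

lemma has_real_derivative_mgf_log_0:
  fixes P :: "'z::finite pmf"
  assumes gpos: "\<forall>z. 0 < pmf P z \<longrightarrow> 0 < g z"
  shows "(mgf_log P g has_real_derivative (\<Sum>z\<in>UNIV. pmf P z * ln (g z))) (at 0)"
  unfolding mgf_log_def
proof (rule DERIV_sum)
  fix z
  show "((\<lambda>t. pmf P z * g z powr t) has_real_derivative pmf P z * ln (g z)) (at 0)"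
  proof (cases "pmf P z = 0")
    case False
    then have "0 < g z" using gpos by (simp add: order_less_le)
    then show ?thesis by (auto intro!: derivative_eq_intros)
  qed simp
qed

lemma prob_iid_tendsto_0_if_mgf_log_less_1:
  fixes P :: "'z::finite pmf"
  assumes g0: "\<forall>z. 0 \<le> g z" and mgf: "mgf_log P g t < 1"
    and A: "\<And>zs. zs \<in> A \<Longrightarrow> \<forall>z\<in>set zs. 0 < pmf P z \<Longrightarrow> 1 \<le> prod_list (map g zs) powr t"
  shows "(\<lambda>n. measure_pmf.prob (iid n P) A) \<longlonglongrightarrow> 0"
proof (rule tendsto_sandwich[of "\<lambda>_. 0" _ _ "\<lambda>n. mgf_log P g t ^ n"])
  have "0 \<le> mgf_log P g t" unfolding mgf_log_def using g0 by (auto intro!: sum_nonneg)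
  then show "(\<lambda>n. mgf_log P g t ^ n) \<longlonglongrightarrow> 0" using mgf by (intro LIMSEQ_power_zero) auto
  show "\<forall>\<^sub>F n in sequentially. measure_pmf.prob (iid n P) A \<le> mgf_log P g t ^ n"
    using prob_iid_le_mgf_log_power[OF g0 A] by simp
qed auto

lemma prob_iid_prod_ge_1_tendsto_0:
  fixes P :: "'z::finite pmf"
  assumes g0: "\<forall>z. 0 \<le> g z" and gpos: "\<forall>z. 0 < pmf P z \<longrightarrow> 0 < g z"
    and neg: "(\<Sum>z\<in>UNIV. pmf P z * ln (g z)) < 0"
  shows "(\<lambda>n. measure_pmf.prob (iid n P) {zs. 1 \<le> prod_list (map g zs)}) \<longlonglongrightarrow> 0"
proof -
  obtain d where d: "0 < d" "\<And>h. 0 < h \<Longrightarrow> h < d \<Longrightarrow> mgf_log P g (0 + h) < mgf_log P g 0"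
    using DERIV_neg_dec_right[OF has_real_derivative_mgf_log_0[OF gpos] neg] by blast
  have "mgf_log P g (d / 2) < 1" using d mgf_log_0[OF gpos] by simp
  then show ?thesis
    by (rule prob_iid_tendsto_0_if_mgf_log_less_1[OF g0]) (use d in \<open>auto intro: ge_one_powr_ge_zero\<close>)
qed

lemma prob_iid_prod_le_1_tendsto_0:
  fixes P :: "'z::finite pmf"
  assumes g0: "\<forall>z. 0 \<le> g z" and gpos: "\<forall>z. 0 < pmf P z \<longrightarrow> 0 < g z"
    and pos: "0 < (\<Sum>z\<in>UNIV. pmf P z * ln (g z))"
  shows "(\<lambda>n. measure_pmf.prob (iid n P) {zs. prod_list (map g zs) \<le> 1}) \<longlonglongrightarrow> 0"
proof -
  obtain d where d: "0 < d" "\<And>h. 0 < h \<Longrightarrow> h < d \<Longrightarrow> mgf_log P g (0 - h) < mgf_log P g 0"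
    using DERIV_pos_inc_left[OF has_real_derivative_mgf_log_0[OF gpos] pos] by blast
  have "mgf_log P g (- d / 2) < 1" using d mgf_log_0[OF gpos] by simp
  moreover have "1 \<le> prod_list (map g zs) powr (- d / 2)"
    if "prod_list (map g zs) \<le> 1" "\<forall>z\<in>set zs. 0 < pmf P z" for zs
  proof -
    have "0 < prod_list (map g zs)" using that(2) gpos by (induction zs) auto
    moreover have "ln (prod_list (map g zs)) \<le> 0" using calculation that(1) by simp
    ultimately show ?thesis using d(1) by (simp add: powr_def mult_nonneg_nonpos)
  qed
  ultimately show ?thesis
    by (rule prob_iid_tendsto_0_if_mgf_log_less_1[OF g0]) auto
qed

lemma sum_pmf_ln_mult_powr:
  fixes P :: "'z::finite pmf"
  assumes gpos: "\<forall>z. 0 < pmf P z \<longrightarrow> 0 < g z"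
  shows "(\<Sum>z\<in>UNIV. pmf P z * ln (g z * 2 powr c)) = (c - log_loss P g) * ln 2"
proof -
  have "(\<Sum>z\<in>UNIV. pmf P z * ln (g z * 2 powr c))
      = (\<Sum>z\<in>UNIV. ln 2 * (pmf P z * log 2 (g z)) + c * ln 2 * pmf P z)"
    using gpos by (intro sum.cong) (auto simp: ln_mult log_def algebra_simps order_less_le)
  also have "\<dots> = (c - log_loss P g) * ln 2"
    by (simp only: log_loss_def sum.distrib sum_distrib_left[symmetric] sum_pmf_eq_1 finite)
      (simp add: algebra_simps sum_pmf_eq_1)
  finally show ?thesis .
qed

lemma prob_iid_prod_ge_tendsto_0:
  fixes P :: "'z::finite pmf"
  assumes g0: "\<forall>z. 0 \<le> g z" and gpos: "\<forall>z. 0 < pmf P z \<longrightarrow> 0 < g z" and "0 < \<eta>"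
  shows "(\<lambda>n. measure_pmf.prob (iid n P)
            {zs. 2 powr (- real n * (log_loss P g - \<eta>)) \<le> prod_list (map g zs)}) \<longlonglongrightarrow> 0"
proof -
  define c where "c = log_loss P g - \<eta>"
  have "(\<lambda>n. measure_pmf.prob (iid n P) {zs. 1 \<le> prod_list (map (\<lambda>z. g z * 2 powr c) zs)}) \<longlonglongrightarrow> 0"
    using g0 gpos \<open>0 < \<eta>\<close>
    by (intro prob_iid_prod_ge_1_tendsto_0) (auto simp: sum_pmf_ln_mult_powr c_def)
  moreover have "measure_pmf.prob (iid n P) {zs. 1 \<le> prod_list (map (\<lambda>z. g z * 2 powr c) zs)}
      = measure_pmf.prob (iid n P) {zs. 2 powr (- real n * c) \<le> prod_list (map g zs)}" for n
    unfolding prob_iid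
    by (intro sum.cong) (auto simp: lists_of_length_def prod_list_mult_powr powr_minus field_simps)
  ultimately show ?thesis by (simp add: c_def)
qed

lemma prob_iid_prod_le_tendsto_0:
  fixes P :: "'z::finite pmf"
  assumes g0: "\<forall>z. 0 \<le> g z" and gpos: "\<forall>z. 0 < pmf P z \<longrightarrow> 0 < g z" and "0 < \<eta>"
  shows "(\<lambda>n. measure_pmf.prob (iid n P)
            {zs. prod_list (map g zs) \<le> 2 powr (- real n * (log_loss P g + \<eta>))}) \<longlonglongrightarrow> 0"
proof -
  define c where "c = log_loss P g + \<eta>"
  have "(\<lambda>n. measure_pmf.prob (iid n P) {zs. prod_list (map (\<lambda>z. g z * 2 powr c) zs) \<le> 1}) \<longlonglongrightarrow> 0"
    using g0 gpos \<open>0 < \<eta>\<close>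
    by (intro prob_iid_prod_le_1_tendsto_0) (auto simp: sum_pmf_ln_mult_powr c_def)
  moreover have "measure_pmf.prob (iid n P) {zs. prod_list (map (\<lambda>z. g z * 2 powr c) zs) \<le> 1}
      = measure_pmf.prob (iid n P) {zs. prod_list (map g zs) \<le> 2 powr (- real n * c)}" for n
    unfolding prob_iid
    by (intro sum.cong) (auto simp: lists_of_length_def prod_list_mult_powr powr_minus field_simps)
  ultimately show ?thesis by (simp add: c_def)
qed

section \<open>Entropy and mutual information\<close>

lemma log_sum_inequality_ln:
  fixes a b :: "'i \<Rightarrow> real"
  assumes "finite S" "S \<noteq> {}" and ab: "\<forall>i\<in>S. 0 < a i \<and> 0 < b i"
  shows "(\<Sum>i\<in>S. a i) * ln ((\<Sum>i\<in>S. a i) / (\<Sum>i\<in>S. b i)) \<le> (\<Sum>i\<in>S. a i * ln (a i / b i))"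
proof -
  define A where "A = (\<Sum>i\<in>S. a i)"
  define B where "B = (\<Sum>i\<in>S. b i)"
  have "0 < A" "0 < B" unfolding A_def B_def using assms by (auto intro: sum_pos)
  have "a i - b i * (A / B) \<le> a i * ln (a i / b i) - a i * ln (A / B)" if "i \<in> S" for i
  proof -
    have ai: "0 < a i" and bi: "0 < b i" using ab that by auto
    define x where "x = (a i * B) / (b i * A)"
    have "0 < x" unfolding x_def using ai bi \<open>0 < A\<close> \<open>0 < B\<close> by simp
    have "a i - b i * (A / B) = a i * (1 - 1 / x)"
      unfolding x_def using ai bi \<open>0 < A\<close> \<open>0 < B\<close> by (simp add: field_simps)
    also have "\<dots> \<le> a i * ln x"
      using ln_le_minus_one[of "1 / x"] \<open>0 < x\<close> ai by (intro mult_left_mono) (auto simp: ln_div)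
    also have "ln x = ln (a i / b i) - ln (A / B)"
      unfolding x_def using ai bi \<open>0 < A\<close> \<open>0 < B\<close> by (simp add: ln_div ln_mult)
    finally show ?thesis by (simp add: right_diff_distrib)
  qed
  then have "(\<Sum>i\<in>S. a i - b i * (A / B)) \<le> (\<Sum>i\<in>S. a i * ln (a i / b i) - a i * ln (A / B))"
    by (rule sum_mono)
  moreover have "(\<Sum>i\<in>S. b i * (A / B)) = A"
    unfolding sum_distrib_right[symmetric] using \<open>0 < B\<close> by (simp add: B_def)
  then have "(\<Sum>i\<in>S. a i - b i * (A / B)) = 0"
    by (simp add: sum_subtractf A_def)
  ultimately show ?thesis
    by (simp add: sum_subtractf sum_distrib_right[symmetric] A_def B_def)
qed

lemma log_sum_inequality:
  fixes a b :: "'i \<Rightarrow> real"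
  assumes S: "finite S" and ab: "\<forall>i\<in>S. 0 < a i \<and> 0 < b i" and q: "(\<Sum>i\<in>S. b i) \<le> q"
  shows "(\<Sum>i\<in>S. a i) * log 2 (\<Sum>i\<in>S. a i) - (\<Sum>i\<in>S. a i) * log 2 q \<le> (\<Sum>i\<in>S. a i * log 2 (a i / b i))"
proof (cases "S = {}")
  case False
  define A where "A = (\<Sum>i\<in>S. a i)"
  define B where "B = (\<Sum>i\<in>S. b i)"
  have "0 < A" "0 < B" unfolding A_def B_def using S False ab by (auto intro: sum_pos)
  have "A * log 2 A - A * log 2 q \<le> A * log 2 (A / B)"
    using \<open>0 < A\<close> \<open>0 < B\<close> q by (simp add: B_def log_divide right_diff_distrib[symmetric])
  also have "\<dots> \<le> (\<Sum>i\<in>S. a i * log 2 (a i / b i))"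
    using divide_right_mono[OF log_sum_inequality_ln[OF S False ab], of "ln 2"]
    by (simp add: A_def B_def log_def sum_divide_distrib)
  finally show ?thesis by (simp add: A_def)
qed simp

lemma mult_log2_ge_minus_2:
  assumes "0 \<le> x"
  shows "-2 \<le> x * log 2 (x :: real)"
proof (cases "x \<le> 1")
  case True
  show ?thesis
  proof (cases "x = 0")
    case False
    then have "x - 1 \<le> x * ln x"
      using ln_le_minus_one[of "1 / x"] assms by (simp add: ln_div field_simps)
    moreover have "1 / 2 \<le> ln (2 :: real)" using ln_le_minus_one[of "1 / 2"] by (simp add: ln_div)
    ultimately have "-1 / ln 2 \<le> x * ln x / ln 2"
      using assms by (intro divide_right_mono) auto
    moreover have "-2 \<le> -1 / ln (2 :: real)"
      using \<open>1 / 2 \<le> ln 2\<close> by (simp add: field_simps)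
    ultimately show ?thesis by (simp add: log_def)
  qed simp
next
  case False
  then have "0 \<le> x * log 2 x" by simp
  then show ?thesis by simp
qed

lemma pmf_le_pmf_map: "pmf M x \<le> pmf (map_pmf f M) (f x)"
proof -
  have "measure_pmf.prob M {x} \<le> measure_pmf.prob M (f -` {f x})"
    by (rule measure_pmf.finite_measure_mono) auto
  then show ?thesis by (simp add: pmf_map measure_pmf_single)
qed

lemma pmf_eq_mult_cond: "pmf M x = pmf (map_pmf f M) (f x) * (pmf M x / pmf (map_pmf f M) (f x))"
  using pmf_le_pmf_map[of M x f] pmf_nonneg[of M x] by (cases "pmf (map_pmf f M) (f x) = 0") auto

lemma sum_pmf_marginals_le:
  fixes J :: "('u \<times> 'v) pmf"
  assumes fin: "finite (set_pmf J)"
    and slice: "\<forall>c. measure_pmf.prob (map_pmf snd J) {x. (c, x) \<in> T} \<le> q"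
  shows "(\<Sum>z\<in>set_pmf J \<inter> T. pmf (map_pmf fst J) (fst z) * pmf (map_pmf snd J) (snd z)) \<le> q"
proof -
  let ?A = "map_pmf fst J" and ?B = "map_pmf snd J"
  have fA: "finite (set_pmf ?A)" "finite (set_pmf ?B)" using fin by auto
  have "(\<Sum>z\<in>set_pmf J \<inter> T. pmf ?A (fst z) * pmf ?B (snd z))
      \<le> (\<Sum>z\<in>Sigma (set_pmf ?A) (\<lambda>c. set_pmf ?B \<inter> {x. (c, x) \<in> T}). pmf ?A (fst z) * pmf ?B (snd z))"
    using fA by (intro sum_mono2) (auto intro: rev_image_eqI)
  also have "\<dots> = (\<Sum>c\<in>set_pmf ?A. \<Sum>x\<in>set_pmf ?B \<inter> {x. (c, x) \<in> T}. pmf ?A c * pmf ?B x)"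
    using fA by (subst sum.Sigma) (auto simp: case_prod_beta)
  also have "\<dots> = (\<Sum>c\<in>set_pmf ?A. pmf ?A c * (\<Sum>x\<in>set_pmf ?B \<inter> {x. (c, x) \<in> T}. pmf ?B x))"
    by (simp add: sum_distrib_left)
  also have "\<dots> = (\<Sum>c\<in>set_pmf ?A. pmf ?A c * measure_pmf.prob ?B {x. (c, x) \<in> T})"
  proof (intro sum.cong refl arg_cong[where f = "(*) _"])
    fix c
    have "measure_pmf.prob ?B {x. (c, x) \<in> T} = measure_pmf.prob ?B (set_pmf ?B \<inter> {x. (c, x) \<in> T})"
      using measure_Int_set_pmf[of ?B "{x. (c, x) \<in> T}"] by (simp only: Int_commute)
    also have "\<dots> = (\<Sum>x\<in>set_pmf ?B \<inter> {x. (c, x) \<in> T}. pmf ?B x)"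
      using fA by (intro measure_measure_pmf_finite) auto
    finally show "(\<Sum>x\<in>set_pmf ?B \<inter> {x. (c, x) \<in> T}. pmf ?B x) = measure_pmf.prob ?B {x. (c, x) \<in> T}"
      by simp
  qed
  also have "\<dots> \<le> (\<Sum>c\<in>set_pmf ?A. pmf ?A c * q)"
    using slice by (intro sum_mono mult_left_mono) auto
  also have "\<dots> = q" using fA by (simp add: sum_distrib_right[symmetric] sum_pmf_eq_1)
  finally show ?thesis .
qed

lemma sum_mutinf_terms_ge:
  fixes J :: "('u \<times> 'v) pmf"
  defines "Q \<equiv> \<lambda>z. pmf (map_pmf fst J) (fst z) * pmf (map_pmf snd J) (snd z)"
  assumes "finite U" "U \<subseteq> set_pmf J" and "(\<Sum>z\<in>U. Q z) \<le> q"
  shows "(\<Sum>z\<in>U. pmf J z) * log 2 (\<Sum>z\<in>U. pmf J z) - (\<Sum>z\<in>U. pmf J z) * log 2 q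
    \<le> (\<Sum>z\<in>U. pmf J z * log 2 (pmf J z / Q z))"
proof (rule log_sum_inequality)
  show "\<forall>z\<in>U. 0 < pmf J z \<and> 0 < Q z"
  proof
    fix z assume "z \<in> U"
    then have "0 < pmf J z" using assms(3) by (auto simp: set_pmf_iff order_less_le)
    then show "0 < pmf J z \<and> 0 < Q z"
      using pmf_le_pmf_map[of J z fst] pmf_le_pmf_map[of J z snd] by (simp add: Q_def)
  qed
qed (use assms in auto)

lemma mutinf_nonneg:
  assumes "finite (set_pmf J)"
  shows "0 \<le> mutinf J"
proof -
  have "(\<Sum>z\<in>set_pmf J \<inter> UNIV. pmf (map_pmf fst J) (fst z) * pmf (map_pmf snd J) (snd z)) \<le> 1"
    using assms by (intro sum_pmf_marginals_le) auto
  then have "(\<Sum>z\<in>set_pmf J. pmf J z) * log 2 (\<Sum>z\<in>set_pmf J. pmf J z) - (\<Sum>z\<in>set_pmf J. pmf J z) * log 2 1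
      \<le> mutinf J"
    unfolding mutinf_def using assms by (intro sum_mutinf_terms_ge) auto
  then show ?thesis using assms by (simp add: sum_pmf_eq_1)
qed

lemma mutinf_ge_prob_mult_log:
  fixes J :: "('u \<times> 'v) pmf"
  assumes fin: "finite (set_pmf J)" and "0 < q"
    and slice: "\<forall>c. measure_pmf.prob (map_pmf snd J) {x. (c, x) \<in> T} \<le> q"
  shows "measure_pmf.prob J T * log 2 (1 / q) - 4 \<le> mutinf J"
proof -
  let ?S = "set_pmf J"
  let ?Q = "\<lambda>z. pmf (map_pmf fst J) (fst z) * pmf (map_pmf snd J) (snd z)"
  let ?f = "\<lambda>z. pmf J z * log 2 (pmf J z / ?Q z)"
  define p where "p = measure_pmf.prob J T"
  have p: "p = (\<Sum>z\<in>?S \<inter> T. pmf J z)"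
    using fin measure_Int_set_pmf[of J T] unfolding p_def
    by (simp add: measure_measure_pmf_finite Int_commute)
  have "(\<Sum>z\<in>?S. pmf J z) = 1" using fin by (simp add: sum_pmf_eq_1)
  then have p': "1 - p = (\<Sum>z\<in>?S - T. pmf J z)"
    using sum.Int_Diff[OF fin, of "pmf J" T] p by simp
  have in_T: "p * log 2 p - p * log 2 q \<le> (\<Sum>z\<in>?S \<inter> T. ?f z)"
    unfolding p using fin slice by (intro sum_mutinf_terms_ge sum_pmf_marginals_le) auto
  have "(\<Sum>z\<in>?S - T. ?Q z) \<le> (\<Sum>z\<in>?S \<inter> UNIV. ?Q z)"
    using fin by (intro sum_mono2) auto
  also have "\<dots> \<le> 1" using fin by (intro sum_pmf_marginals_le) auto
  finally have out_T: "(1 - p) * log 2 (1 - p) - (1 - p) * log 2 1 \<le> (\<Sum>z\<in>?S - T. ?f z)"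
    unfolding p' using fin by (intro sum_mutinf_terms_ge) auto
  have "mutinf J = (\<Sum>z\<in>?S \<inter> T. ?f z) + (\<Sum>z\<in>?S - T. ?f z)"
    unfolding mutinf_def by (rule sum.Int_Diff[OF fin])
  moreover have "-2 \<le> p * log 2 p" "-2 \<le> (1 - p) * log 2 (1 - p)"
    unfolding p_def by (auto intro: mult_log2_ge_minus_2)
  ultimately show ?thesis
    using in_T out_T \<open>0 < q\<close> by (simp add: p_def log_divide)
qed

lemma mutinf_map_prod_inj:
  assumes "inj f" "inj g"
  shows "mutinf (map_pmf (map_prod f g) J) = mutinf J"
proof -
  have inj: "inj (map_prod f g)" using map_prod_inj_on[OF assms] by simp
  have fst: "map_pmf fst (map_pmf (map_prod f g) J) = map_pmf f (map_pmf fst J)"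
    and snd: "map_pmf snd (map_pmf (map_prod f g) J) = map_pmf g (map_pmf snd J)"
    by (simp_all add: pmf.map_comp comp_def)
  show ?thesis
    unfolding mutinf_def set_map_pmf sum.reindex[OF inj_on_subset[OF inj subset_UNIV]] comp_def
      pmf_map_inj'[OF inj] fst snd fst_map_prod snd_map_prod
      pmf_map_inj'[OF assms(1)] pmf_map_inj'[OF assms(2)] ..
qed

lemma sum_pmf_map:
  fixes P :: "'z::finite pmf" and f :: "'z \<Rightarrow> 'y::finite"
  shows "(\<Sum>z\<in>UNIV. pmf P z * h (f z)) = (\<Sum>y\<in>UNIV. pmf (map_pmf f P) y * h y)"
proof -
  have "(\<Sum>z\<in>UNIV. pmf P z * h (f z)) = measure_pmf.expectation P (\<lambda>z. h (f z))"
    by (subst integral_measure_pmf_real[of UNIV]) (auto simp: mult.commute)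
  also have "\<dots> = measure_pmf.expectation (map_pmf f P) h" by simp
  also have "\<dots> = (\<Sum>y\<in>UNIV. pmf (map_pmf f P) y * h y)"
    by (subst integral_measure_pmf_real[of UNIV]) (auto simp: mult.commute)
  finally show ?thesis .
qed

lemma sum_UNIV_pmf_eq_sum_set_pmf:
  fixes P :: "'z::finite pmf"
  shows "(\<Sum>z\<in>UNIV. pmf P z * h z) = (\<Sum>z\<in>set_pmf P. pmf P z * h z)"
  by (rule sum.mono_neutral_right) (auto simp: set_pmf_iff)

lemma ent_eq_log_loss: "ent (P :: 'z::finite pmf) = log_loss P (pmf P)"
  by (simp add: ent_def log_loss_def sum_UNIV_pmf_eq_sum_set_pmf)

lemma log_loss_pmf_map:
  fixes P :: "'z::finite pmf" and f :: "'z \<Rightarrow> 'y::finite"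
  shows "log_loss P (\<lambda>z. pmf (map_pmf f P) (f z)) = ent (map_pmf f P)"
  unfolding log_loss_def ent_eq_log_loss sum_pmf_map[of P "\<lambda>y. log 2 (pmf (map_pmf f P) y)"] ..

lemma ent_map_pmf_inj:
  fixes P :: "'z::finite pmf" and f :: "'z \<Rightarrow> 'y::finite"
  assumes "inj f"
  shows "ent (map_pmf f P) = ent P"
  using log_loss_pmf_map[of P f] by (simp add: pmf_map_inj'[OF assms] ent_eq_log_loss)

lemma log_loss_cond:
  fixes P :: "'z::finite pmf" and f :: "'z \<Rightarrow> 'y::finite"
  shows "log_loss P (\<lambda>z. pmf P z / pmf (map_pmf f P) (f z)) = ent P - ent (map_pmf f P)"
proof -
  have "pmf P z * log 2 (pmf P z / pmf (map_pmf f P) (f z))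
      = pmf P z * log 2 (pmf P z) - pmf P z * log 2 (pmf (map_pmf f P) (f z))" for z
  proof (cases "pmf P z = 0")
    case False
    then have "0 < pmf P z" by (simp add: order_less_le)
    moreover from this have "0 < pmf (map_pmf f P) (f z)"
      using pmf_le_pmf_map[of P z f] by linarith
    ultimately show ?thesis by (simp add: log_divide right_diff_distrib)
  qed simp
  then show ?thesis
    by (simp add: log_loss_def sum_subtractf ent_eq_log_loss[of P] log_loss_pmf_map[symmetric])
qed

lemma mutinf_eq_ent:
  fixes P :: "('a::finite \<times> 'b::finite) pmf"
  shows "mutinf P = ent (map_pmf fst P) + ent (map_pmf snd P) - ent P"
proof -
  have "pmf P z * log 2 (pmf P z / (pmf (map_pmf fst P) (fst z) * pmf (map_pmf snd P) (snd z)))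
      = pmf P z * log 2 (pmf P z) - pmf P z * log 2 (pmf (map_pmf fst P) (fst z))
        - pmf P z * log 2 (pmf (map_pmf snd P) (snd z))" for z
  proof (cases "pmf P z = 0")
    case False
    then have "0 < pmf P z" by (simp add: order_less_le)
    moreover from this have "0 < pmf (map_pmf fst P) (fst z)" "0 < pmf (map_pmf snd P) (snd z)"
      using pmf_le_pmf_map[of P z fst] pmf_le_pmf_map[of P z snd] by linarith+
    ultimately show ?thesis by (simp add: log_divide log_mult algebra_simps)
  qed simp
  then show ?thesis
    unfolding mutinf_def sum_UNIV_pmf_eq_sum_set_pmf[symmetric]
    by (simp add: sum_subtractf ent_eq_log_loss[of P] log_loss_pmf_map[symmetric] log_loss_def)
qed

lemma ent_subadditive:
  fixes P :: "('a::finite \<times> 'b::finite) pmf"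
  shows "ent P \<le> ent (map_pmf fst P) + ent (map_pmf snd P)"
  using mutinf_nonneg[of P] by (simp add: mutinf_eq_ent)

section \<open>Strong converses\<close>

lemma prob_iid_le_atypical_plus_weight:
  fixes P :: "'z::finite pmf"
  assumes fac: "\<forall>z. pmf P z = w z * g z" and w0: "\<forall>z. 0 \<le> w z" and "0 \<le> \<sigma>"
  shows "measure_pmf.prob (iid n P) D
    \<le> measure_pmf.prob (iid n P) {zs. \<sigma> \<le> prod_list (map g zs)}
      + \<sigma> * (\<Sum>zs\<in>lists_of_length n \<inter> D. prod_list (map w zs))"
proof -
  define A where "A = {zs. \<sigma> \<le> prod_list (map g zs)}"
  have "measure_pmf.prob (iid n P) (D - A) \<le> \<sigma> * (\<Sum>zs\<in>lists_of_length n \<inter> (D - A). prod_list (map w zs))"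
    by (rule prob_iid_le_weight[OF fac w0]) (auto simp: A_def)
  also have "\<dots> \<le> \<sigma> * (\<Sum>zs\<in>lists_of_length n \<inter> D. prod_list (map w zs))"
    using w0 \<open>0 \<le> \<sigma>\<close> by (intro mult_left_mono sum_mono2) (auto intro!: prod_list_nonneg)
  moreover have "measure_pmf.prob (iid n P) (D \<inter> A) \<le> measure_pmf.prob (iid n P) A"
    by (intro measure_pmf.finite_measure_mono) auto
  ultimately show ?thesis
    using measure_pmf.finite_measure_Diff'[of D "iid n P" A] by (simp add: A_def)
qed

lemma log_loss_le_rate:
  fixes P :: "'z::finite pmf" and D :: "nat \<Rightarrow> 'z list set"
  assumes "\<epsilon> < 1"
    and decodable: "\<forall>\<^sub>F n in sequentially. 1 - \<epsilon> \<le> measure_pmf.prob (iid n P) (D n)"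
    and fac: "\<forall>z. pmf P z = w z * g z" and w0: "\<forall>z. 0 \<le> w z" and g0: "\<forall>z. 0 \<le> g z"
    and weight: "\<And>\<gamma>. 0 < \<gamma> \<Longrightarrow> \<forall>\<^sub>F n in sequentially.
      (\<Sum>zs\<in>lists_of_length n \<inter> D n. prod_list (map w zs)) \<le> 2 powr (real n * (R + \<gamma>))"
  shows "log_loss P g \<le> R"
proof (rule ccontr)
  assume "\<not> log_loss P g \<le> R"
  define \<eta> where "\<eta> = (log_loss P g - R) / 3"
  have "0 < \<eta>" using \<open>\<not> log_loss P g \<le> R\<close> by (simp add: \<eta>_def)
  have gpos: "\<forall>z. 0 < pmf P z \<longrightarrow> 0 < g z"
    using fac g0 by (metis mult_zero_right order_less_le)
  define \<sigma> where "\<sigma> n = 2 powr (- real n * (log_loss P g - \<eta>))" for n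
  define a where "a n = measure_pmf.prob (iid n P) {zs. \<sigma> n \<le> prod_list (map g zs)}" for n
  have "(\<lambda>n. a n + (2 powr (- \<eta>)) ^ n) \<longlonglongrightarrow> 0 + 0"
    unfolding a_def \<sigma>_def using prob_iid_prod_ge_tendsto_0[OF g0 gpos \<open>0 < \<eta>\<close>] \<open>0 < \<eta>\<close>
    by (intro tendsto_add LIMSEQ_power_zero) (auto simp: powr_minus field_simps)
  moreover have "\<forall>\<^sub>F n in sequentially. 1 - \<epsilon> \<le> a n + (2 powr (- \<eta>)) ^ n"
    using decodable weight[OF \<open>0 < \<eta>\<close>]
  proof eventually_elim
    case (elim n)
    have "\<sigma> n * (\<Sum>zs\<in>lists_of_length n \<inter> D n. prod_list (map w zs)) \<le> \<sigma> n * 2 powr (real n * (R + \<eta>))"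
      using elim(2) by (intro mult_left_mono) (simp_all add: \<sigma>_def)
    also have "\<dots> = 2 powr (- real n * (log_loss P g - \<eta>) + real n * (R + \<eta>))"
      unfolding \<sigma>_def by (rule powr_add[symmetric])
    also have "- real n * (log_loss P g - \<eta>) + real n * (R + \<eta>) = - \<eta> * real n"
      by (simp add: \<eta>_def field_simps)
    also have "2 powr (- \<eta> * real n) = (2 powr (- \<eta>)) ^ n"
      by (simp add: powr_realpow[symmetric] powr_powr)
    finally have "\<sigma> n * (\<Sum>zs\<in>lists_of_length n \<inter> D n. prod_list (map w zs)) \<le> (2 powr (- \<eta>)) ^ n" .
    then show ?case
      using elim(1) prob_iid_le_atypical_plus_weight[OF fac w0, of "\<sigma> n" n "D n"]
      by (simp add: a_def \<sigma>_def)
  qed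
  ultimately have "1 - \<epsilon> \<le> 0 + 0" by (intro tendsto_lowerbound) auto
  then show False using \<open>\<epsilon> < 1\<close> by simp
qed

lemma not_eventually_linear_le:
  assumes "0 < c"
  shows "\<not> (\<forall>\<^sub>F n in sequentially. c * real n \<le> d)"
proof
  assume "\<forall>\<^sub>F n in sequentially. c * real n \<le> d"
  then obtain N where N: "\<And>n. N \<le> n \<Longrightarrow> c * real n \<le> d" by (auto simp: eventually_sequentially)
  obtain n :: nat where "d / c < real n" "N \<le> n"
    using reals_Archimedean2 by (metis max.cobounded1 max.cobounded2 of_nat_le_iff order_less_le_trans)
  then show False using N[OF \<open>N \<le> n\<close>] assms by (simp add: pos_divide_less_eq mult.commute)
qed

definition encrypt ::
  "('a list \<Rightarrow> 'a list \<Rightarrow> 'c1) \<Rightarrow> ('b list \<Rightarrow> 'b list \<Rightarrow> 'c2) \<Rightarrow> ('a \<times> 'b) list \<Rightarrow> ('a \<times> 'b) list \<Rightarrow> 'c1 \<times> 'c2"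
  where "encrypt Phi1 Phi2 ks zs = (Phi1 (map fst ks) (map fst zs), Phi2 (map snd ks) (map snd zs))"

definition compatible_plaintexts :: "('k \<Rightarrow> 'x \<Rightarrow> 'c) \<Rightarrow> 'k set \<Rightarrow> 'x set \<Rightarrow> 'c \<Rightarrow> 'x set" where
  "compatible_plaintexts E K X c = {x \<in> X. \<exists>k\<in>K. E k x = c}"

lemma card_compatible_plaintexts_le:
  assumes "finite K" and inj: "\<forall>k\<in>K. inj_on (E k) X"
  shows "card (compatible_plaintexts E K X c) \<le> card K"
proof -
  define key where "key x = (SOME k. k \<in> K \<and> E k x = c)" for x
  have key: "key x \<in> K \<and> E (key x) x = c" if "x \<in> compatible_plaintexts E K X c" for x
    using that unfolding compatible_plaintexts_def key_def by (metis (mono_tags, lifting) mem_Collect_eq someI)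
  have "inj_on key (compatible_plaintexts E K X c)"
  proof (rule inj_onI)
    fix x x' assume x: "x \<in> compatible_plaintexts E K X c" and x': "x' \<in> compatible_plaintexts E K X c"
      and "key x = key x'"
    then have "E (key x) x = E (key x) x'" using key by metis
    then show "x = x'"
      using inj key[OF x] x x' unfolding compatible_plaintexts_def by (auto dest: inj_onD)
  qed
  then show ?thesis using key \<open>finite K\<close> by (intro card_inj_on_le) auto
qed

lemma sum_compatible_plaintexts_mono:
  fixes f :: "'x \<Rightarrow> real"
  assumes "finite X'" "K \<subseteq> K'" "X \<subseteq> X'" "\<forall>x. 0 \<le> f x"
  shows "(\<Sum>x\<in>compatible_plaintexts E K X c. f x) \<le> (\<Sum>x\<in>compatible_plaintexts E K' X' c. f x)"
  using assms by (intro sum_mono2) (auto simp: compatible_plaintexts_def intro: finite_subset)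

lemma cipher_joint_eq_map_pmf:
  "cipher_joint n pX pK Phi1 Phi2 = map_pmf (\<lambda>(zs, ks). (encrypt Phi1 Phi2 ks zs, (map fst zs, map snd zs)))
     (pair_pmf (iid n pX) (iid n pK))"
  unfolding cipher_joint_def pair_pmf_def map_pmf_def encrypt_def by (simp add: bind_assoc_pmf bind_return_pmf)

lemma map_snd_cipher_joint:
  "map_pmf snd (cipher_joint n pX pK Phi1 Phi2) = map_pmf (\<lambda>zs. (map fst zs, map snd zs)) (iid n pX)"
proof -
  have "map_pmf snd (cipher_joint n pX pK Phi1 Phi2)
      = map_pmf ((\<lambda>zs. (map fst zs, map snd zs)) \<circ> fst) (pair_pmf (iid n pX) (iid n pK))"
    unfolding cipher_joint_eq_map_pmf pmf.map_comp by (rule pmf.map_cong) auto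
  then show ?thesis by (simp add: pmf.map_comp[symmetric] map_fst_pair_pmf)
qed

lemma finite_set_pmf_cipher_joint:
  fixes pX pK :: "('a::finite \<times> 'b::finite) pmf"
  shows "finite (set_pmf (cipher_joint n pX pK Phi1 Phi2))"
  using finite_subset[OF set_pmf_iid finite_lists_of_length]
  unfolding cipher_joint_eq_map_pmf by (auto intro!: finite_imageI)

lemma mutinf_cipher_joint_ge:
  fixes pX pK :: "('a::finite \<times> 'b::finite) pmf"
  assumes fac: "\<forall>z. pmf pX z = w z * g z" and w0: "\<forall>z. 0 \<le> w z"
    and "0 < \<sigma>" "\<sigma> \<le> \<tau>"
    and atypical: "\<forall>zs\<in>lists_of_length n \<inter> X. prod_list (map g zs) \<le> \<sigma>"
    and few: "\<forall>c. (\<Sum>zs\<in>compatible_plaintexts (encrypt Phi1 Phi2) (lists_of_length n \<inter> K)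
                (lists_of_length n \<inter> X) c. prod_list (map w zs)) \<le> 1 / \<tau>"
  shows "measure_pmf.prob (iid n pX) X * measure_pmf.prob (iid n pK) K * log 2 (\<tau> / \<sigma>) - 4
    \<le> mutinf (cipher_joint n pX pK Phi1 Phi2)"
proof -
  define J where "J = cipher_joint n pX pK Phi1 Phi2"
  define T where "T = (\<lambda>(zs, ks). (encrypt Phi1 Phi2 ks zs, (map fst zs, map snd zs)))
    ` ((lists_of_length n \<inter> X) \<times> (lists_of_length n \<inter> K))"
  have "measure_pmf.prob (iid n pX) X * measure_pmf.prob (iid n pK) K
      = measure_pmf.prob (pair_pmf (iid n pX) (iid n pK)) ((lists_of_length n \<inter> X) \<times> (lists_of_length n \<inter> K))"
    by (simp add: measure_pmf_prob_product prob_iid Int_assoc[symmetric])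
  also have "\<dots> \<le> measure_pmf.prob J T"
    unfolding J_def cipher_joint_eq_map_pmf T_def measure_map_pmf
    by (intro measure_pmf.finite_measure_mono) auto
  finally have T: "measure_pmf.prob (iid n pX) X * measure_pmf.prob (iid n pK) K \<le> measure_pmf.prob J T" .
  \<comment> \<open>Given the ciphertext, the plaintexts in \<open>T\<close> are improbable: few and each atypical.\<close>
  have slice: "measure_pmf.prob (map_pmf snd J) {x. (c, x) \<in> T} \<le> \<sigma> / \<tau>" for c
  proof -
    define U where "U = compatible_plaintexts (encrypt Phi1 Phi2) (lists_of_length n \<inter> K) (lists_of_length n \<inter> X) c"
    have U: "lists_of_length n \<inter> U = U" by (auto simp: U_def compatible_plaintexts_def)
    have "(\<lambda>zs. (map fst zs, map snd zs)) -` {x. (c, x) \<in> T} = U"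
      using inj_map_fst_snd unfolding T_def U_def compatible_plaintexts_def by (auto dest: injD)
    then have "measure_pmf.prob (map_pmf snd J) {x. (c, x) \<in> T} = measure_pmf.prob (iid n pX) U"
      by (simp add: J_def map_snd_cipher_joint)
    also have "\<dots> \<le> \<sigma> * (\<Sum>zs\<in>U. prod_list (map w zs))"
      using prob_iid_le_weight[OF fac w0, of n U] atypical unfolding U
      by (auto simp: U_def compatible_plaintexts_def)
    also have "\<dots> \<le> \<sigma> * (1 / \<tau>)"
      using few[rule_format, of c] \<open>0 < \<sigma>\<close> unfolding U_def by (intro mult_left_mono) auto
    finally show ?thesis by simp
  qed
  have "0 < \<sigma> / \<tau>" "0 \<le> log 2 (\<tau> / \<sigma>)" using \<open>0 < \<sigma>\<close> \<open>\<sigma> \<le> \<tau>\<close> by auto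
  have "measure_pmf.prob J T * log 2 (1 / (\<sigma> / \<tau>)) - 4 \<le> mutinf J"
    using slice \<open>0 < \<sigma> / \<tau>\<close> unfolding J_def
    by (intro mutinf_ge_prob_mult_log finite_set_pmf_cipher_joint) auto
  moreover have "measure_pmf.prob (iid n pX) X * measure_pmf.prob (iid n pK) K * log 2 (\<tau> / \<sigma>)
      \<le> measure_pmf.prob J T * log 2 (\<tau> / \<sigma>)"
    using T \<open>0 \<le> log 2 (\<tau> / \<sigma>)\<close> by (rule mult_right_mono)
  ultimately show ?thesis by (simp add: J_def)
qed

lemma mutinf_cipher_joint_ge_threshold:
  fixes pX pK :: "('a::finite \<times> 'b::finite) pmf"
  assumes fac: "\<forall>z. pmf pX z = w z * g z" and w0: "\<forall>z. 0 \<le> w z"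
    and "0 < \<sigma>" "\<sigma> \<le> \<tau>"
    and few: "\<forall>c. (\<Sum>zs\<in>compatible_plaintexts (encrypt Phi1 Phi2)
      {ks \<in> lists_of_length n. \<tau> \<le> prod_list (map gK ks)} (lists_of_length n \<inter> D) c. prod_list (map w zs)) \<le> 1 / \<tau>"
  shows "(measure_pmf.prob (iid n pX) D - measure_pmf.prob (iid n pX) {zs. \<sigma> \<le> prod_list (map g zs)})
      * (1 - measure_pmf.prob (iid n pK) {ks. prod_list (map gK ks) \<le> \<tau>}) * log 2 (\<tau> / \<sigma>) - 4
    \<le> mutinf (cipher_joint n pX pK Phi1 Phi2)"
proof -
  define A where "A = {zs. \<sigma> \<le> prod_list (map g zs)}"
  define B where "B = {ks. prod_list (map gK ks) \<le> \<tau>}"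
  have "measure_pmf.prob (iid n pX) D - measure_pmf.prob (iid n pX) A \<le> measure_pmf.prob (iid n pX) (D - A)"
    using measure_pmf.finite_measure_Diff'[of D "iid n pX" A]
      measure_pmf.finite_measure_mono[of "D \<inter> A" A "iid n pX"] by simp
  moreover have "1 - measure_pmf.prob (iid n pK) B = measure_pmf.prob (iid n pK) (- B)"
    using measure_pmf.prob_compl[of B "iid n pK"] by (simp add: Compl_eq_Diff_UNIV)
  moreover have "0 \<le> log 2 (\<tau> / \<sigma>)" using \<open>0 < \<sigma>\<close> \<open>\<sigma> \<le> \<tau>\<close> by simp
  ultimately have "(measure_pmf.prob (iid n pX) D - measure_pmf.prob (iid n pX) A)
      * (1 - measure_pmf.prob (iid n pK) B) * log 2 (\<tau> / \<sigma>)
    \<le> measure_pmf.prob (iid n pX) (D - A) * measure_pmf.prob (iid n pK) (- B) * log 2 (\<tau> / \<sigma>)"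
    by (auto intro!: mult_right_mono)
  also have "\<dots> - 4 \<le> mutinf (cipher_joint n pX pK Phi1 Phi2)"
  proof (rule mutinf_cipher_joint_ge[OF fac w0 \<open>0 < \<sigma>\<close> \<open>\<sigma> \<le> \<tau>\<close>])
    show "\<forall>zs\<in>lists_of_length n \<inter> (D - A). prod_list (map g zs) \<le> \<sigma>"
      by (auto simp: A_def)
    show "\<forall>c. (\<Sum>zs\<in>compatible_plaintexts (encrypt Phi1 Phi2) (lists_of_length n \<inter> - B)
        (lists_of_length n \<inter> (D - A)) c. prod_list (map w zs)) \<le> 1 / \<tau>"
    proof
      fix c
      have "(\<Sum>zs\<in>compatible_plaintexts (encrypt Phi1 Phi2) (lists_of_length n \<inter> - B)
            (lists_of_length n \<inter> (D - A)) c. prod_list (map w zs))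
          \<le> (\<Sum>zs\<in>compatible_plaintexts (encrypt Phi1 Phi2)
            {ks \<in> lists_of_length n. \<tau> \<le> prod_list (map gK ks)} (lists_of_length n \<inter> D) c. prod_list (map w zs))"
        using w0 by (intro sum_compatible_plaintexts_mono) (auto simp: B_def intro!: prod_list_nonneg)
      also have "\<dots> \<le> 1 / \<tau>" using few by blast
      finally show "(\<Sum>zs\<in>compatible_plaintexts (encrypt Phi1 Phi2) (lists_of_length n \<inter> - B)
        (lists_of_length n \<inter> (D - A)) c. prod_list (map w zs)) \<le> 1 / \<tau>" .
    qed
  qed
  finally show ?thesis by (simp add: A_def B_def)
qed

lemma eventually_mutinf_cipher_joint_ge:
  fixes pX pK :: "('a::finite \<times> 'b::finite) pmf" and D :: "nat \<Rightarrow> ('a \<times> 'b) list set"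
  assumes "\<epsilon> < 1"
    and decodable: "\<forall>\<^sub>F n in sequentially. 1 - \<epsilon> \<le> measure_pmf.prob (iid n pX) (D n)"
    and fac: "\<forall>z. pmf pX z = w z * g z" and w0: "\<forall>z. 0 \<le> w z" and g0: "\<forall>z. 0 \<le> g z"
    and gK0: "\<forall>z. 0 \<le> gK z" and gKpos: "\<forall>z. 0 < pmf pK z \<longrightarrow> 0 < gK z"
    and few: "\<forall>\<^sub>F n in sequentially. \<forall>\<tau>>0. \<forall>c.
      (\<Sum>zs\<in>compatible_plaintexts (encrypt (Phi1 n) (Phi2 n)) {ks \<in> lists_of_length n. \<tau> \<le> prod_list (map gK ks)}
         (lists_of_length n \<inter> D n) c. prod_list (map w zs)) \<le> 1 / \<tau>"
    and gap: "log_loss pK gK < log_loss pX g"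
  defines "\<eta> \<equiv> (log_loss pX g - log_loss pK gK) / 4"
  shows "\<forall>\<^sub>F n in sequentially. (1 - \<epsilon>) * \<eta> * real n - 4 \<le> mutinf (cipher_joint n pX pK (Phi1 n) (Phi2 n))"
proof -
  have "0 < \<eta>" and sep: "log_loss pK gK + \<eta> \<le> log_loss pX g - \<eta>"
    using gap by (simp_all add: \<eta>_def field_simps)
  have gpos: "\<forall>z. 0 < pmf pX z \<longrightarrow> 0 < g z"
    using fac g0 by (metis mult_zero_right order_less_le)
  define \<sigma> \<tau> where "\<sigma> n = 2 powr (- real n * (log_loss pX g - \<eta>))"
    and "\<tau> n = 2 powr (- real n * (log_loss pK gK + \<eta>))" for n
  define a b where "a n = measure_pmf.prob (iid n pX) {zs. \<sigma> n \<le> prod_list (map g zs)}"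
    and "b n = measure_pmf.prob (iid n pK) {ks. prod_list (map gK ks) \<le> \<tau> n}" for n
  have "(\<lambda>n. (1 - \<epsilon> - a n) * (1 - b n)) \<longlonglongrightarrow> (1 - \<epsilon> - 0) * (1 - 0)"
    unfolding a_def b_def \<sigma>_def \<tau>_def
    using prob_iid_prod_ge_tendsto_0[OF g0 gpos \<open>0 < \<eta>\<close>] prob_iid_prod_le_tendsto_0[OF gK0 gKpos \<open>0 < \<eta>\<close>]
    by (intro tendsto_intros)
  then have "\<forall>\<^sub>F n in sequentially. (1 - \<epsilon>) / 2 < (1 - \<epsilon> - a n) * (1 - b n)"
    using \<open>\<epsilon> < 1\<close> by (intro order_tendstoD(1)) auto
  then show ?thesis
    using decodable few
  proof eventually_elim
    case (elim n)
    have "0 < \<sigma> n" "0 < \<tau> n" "\<sigma> n \<le> \<tau> n"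
      unfolding \<sigma>_def \<tau>_def using sep by (simp_all add: mult_left_mono)
    have "log 2 (\<tau> n / \<sigma> n) = 2 * \<eta> * real n"
      by (simp add: \<sigma>_def \<tau>_def log_divide \<eta>_def field_simps)
    have "(1 - \<epsilon> - a n) * (1 - b n) \<le> (measure_pmf.prob (iid n pX) (D n) - a n) * (1 - b n)"
      using elim(2) by (intro mult_right_mono) (auto simp: b_def)
    with elim(1) have "(1 - \<epsilon>) / 2 * (2 * \<eta> * real n)
        \<le> (measure_pmf.prob (iid n pX) (D n) - a n) * (1 - b n) * (2 * \<eta> * real n)"
      using \<open>0 < \<eta>\<close> by (intro mult_right_mono) auto
    also have "\<dots> - 4 \<le> mutinf (cipher_joint n pX pK (Phi1 n) (Phi2 n))"
      using mutinf_cipher_joint_ge_threshold[OF fac w0 \<open>0 < \<sigma> n\<close> \<open>\<sigma> n \<le> \<tau> n\<close>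
          allI[OF elim(3)[rule_format, OF \<open>0 < \<tau> n\<close>]]]
        \<open>log 2 (\<tau> n / \<sigma> n) = 2 * \<eta> * real n\<close> \<open>0 < \<sigma> n\<close> \<open>\<sigma> n \<le> \<tau> n\<close>
      by (simp add: a_def b_def)
    finally show ?case by simp
  qed
qed

lemma log_loss_le_key_log_loss:
  fixes pX pK :: "('a::finite \<times> 'b::finite) pmf" and D :: "nat \<Rightarrow> ('a \<times> 'b) list set"
  assumes "\<epsilon> < 1"
    and decodable: "\<forall>\<^sub>F n in sequentially. 1 - \<epsilon> \<le> measure_pmf.prob (iid n pX) (D n)"
    and secure: "\<forall>\<^sub>F n in sequentially. mutinf (cipher_joint n pX pK (Phi1 n) (Phi2 n)) \<le> \<delta>"
    and fac: "\<forall>z. pmf pX z = w z * g z" and w0: "\<forall>z. 0 \<le> w z" and g0: "\<forall>z. 0 \<le> g z"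
    and gK0: "\<forall>z. 0 \<le> gK z" and gKpos: "\<forall>z. 0 < pmf pK z \<longrightarrow> 0 < gK z"
    and few: "\<forall>\<^sub>F n in sequentially. \<forall>\<tau>>0. \<forall>c.
      (\<Sum>zs\<in>compatible_plaintexts (encrypt (Phi1 n) (Phi2 n)) {ks \<in> lists_of_length n. \<tau> \<le> prod_list (map gK ks)}
         (lists_of_length n \<inter> D n) c. prod_list (map w zs)) \<le> 1 / \<tau>"
  shows "log_loss pX g \<le> log_loss pK gK"
proof (rule ccontr)
  define c where "c = (1 - \<epsilon>) * ((log_loss pX g - log_loss pK gK) / 4)"
  assume "\<not> log_loss pX g \<le> log_loss pK gK"
  then have gap: "log_loss pK gK < log_loss pX g" by simp
  then have "0 < c" using \<open>\<epsilon> < 1\<close> by (simp add: c_def)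
  have "\<forall>\<^sub>F n in sequentially. c * real n \<le> \<delta> + 4"
    using eventually_mutinf_cipher_joint_ge[OF assms(1,2) fac w0 g0 gK0 gKpos few gap] secure
  proof eventually_elim
    case (elim n)
    then show ?case unfolding c_def by linarith
  qed
  with \<open>0 < c\<close> show False using not_eventually_linear_le by blast
qed

section \<open>Distributed encryption systems\<close>

lemma card_le_powr_of_log_le:
  assumes "0 < n" "log 2 (real (card C)) / real n \<le> R"
  shows "real (card C) \<le> 2 powr (real n * R)"
proof (cases "card C = 0")
  case False
  then have "log 2 (real (card C)) \<le> real n * R" using assms by (simp add: divide_le_eq mult.commute)
  then have "2 powr log 2 (real (card C)) \<le> 2 powr (real n * R)" by simp
  then show ?thesis using False by simp
qed simp

lemma is_system_swap:
  assumes "is_system n C1 C2 Phi1 Phi2 Psi phi1 phi2 psi"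
  shows "is_system n C2 C1 Phi2 Phi1 (\<lambda>k2 k1 c2 c1. prod.swap (Psi k1 k2 c1 c2)) phi2 phi1
    (\<lambda>m2 m1. prod.swap (psi m1 m2))"
  using assms unfolding is_system_def by auto

lemma map_fst_snd_comp_map_swap: "(\<lambda>zs. (map fst zs, map snd zs)) \<circ> map prod.swap = prod.swap \<circ> (\<lambda>zs. (map fst zs, map snd zs))"
  by (simp add: fun_eq_iff comp_def)

lemma err_prob_swap:
  "err_prob n (map_pmf prod.swap pX) phi2 phi1 (\<lambda>m2 m1. prod.swap (psi m1 m2)) = err_prob n pX phi1 phi2 psi"
  unfolding err_prob_def iid_map_pmf pmf.map_comp map_fst_snd_comp_map_swap
  by (simp only: pmf.map_comp[symmetric] measure_map_pmf)
    (auto simp: prod_eq_iff intro!: arg_cong[where f = "measure_pmf.prob _"])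

lemma cipher_joint_swap:
  "cipher_joint n (map_pmf prod.swap pX) (map_pmf prod.swap pK) Phi2 Phi1
    = map_pmf (map_prod prod.swap prod.swap) (cipher_joint n pX pK Phi1 Phi2)"
  unfolding cipher_joint_eq_map_pmf iid_map_pmf map_pair[symmetric] pmf.map_comp
  by (rule pmf.map_cong) (auto simp: encrypt_def comp_def)

locale reliable_secure_code =
  fixes pX pK :: "('a::finite \<times> 'b::finite) pmf"
    and \<epsilon> \<delta> R1 R2 :: real
    and C1 C2 :: "nat \<Rightarrow> nat set"
    and Phi1 :: "nat \<Rightarrow> 'a list \<Rightarrow> 'a list \<Rightarrow> nat" and Phi2 :: "nat \<Rightarrow> 'b list \<Rightarrow> 'b list \<Rightarrow> nat"
    and Psi :: "nat \<Rightarrow> 'a list \<Rightarrow> 'b list \<Rightarrow> nat \<Rightarrow> nat \<Rightarrow> 'a list \<times> 'b list"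
    and phi1 :: "nat \<Rightarrow> 'a list \<Rightarrow> nat" and phi2 :: "nat \<Rightarrow> 'b list \<Rightarrow> nat"
    and psi :: "nat \<Rightarrow> nat \<Rightarrow> nat \<Rightarrow> 'a list \<times> 'b list"
  assumes eps_less_1: "\<epsilon> < 1"
    and systems: "\<forall>n\<ge>1. is_system n (C1 n) (C2 n) (Phi1 n) (Phi2 n) (Psi n) (phi1 n) (phi2 n) (psi n)"
    and rates: "\<forall>\<gamma>>0. \<exists>n0. \<forall>n\<ge>n0. n \<ge> 1 \<longrightarrow>
          log 2 (real (card (C1 n))) / real n \<le> R1 + \<gamma> \<and>
          log 2 (real (card (C2 n))) / real n \<le> R2 + \<gamma> \<and>
          err_prob n pX (phi1 n) (phi2 n) (psi n) \<le> \<epsilon> \<and>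
          mutinf (cipher_joint n pX pK (Phi1 n) (Phi2 n)) \<le> \<delta>"
begin

definition decodable :: "nat \<Rightarrow> ('a \<times> 'b) list set" where
  "decodable n = {zs. psi n (phi1 n (map fst zs)) (phi2 n (map snd zs)) = (map fst zs, map snd zs)}"

lemma eventually_rates:
  assumes "0 < \<gamma>"
  shows "\<forall>\<^sub>F n in sequentially. 1 \<le> n \<and>
          log 2 (real (card (C1 n))) / real n \<le> R1 + \<gamma> \<and>
          log 2 (real (card (C2 n))) / real n \<le> R2 + \<gamma> \<and>
          err_prob n pX (phi1 n) (phi2 n) (psi n) \<le> \<epsilon> \<and>
          mutinf (cipher_joint n pX pK (Phi1 n) (Phi2 n)) \<le> \<delta>"
proof -
  obtain n0 where "\<forall>n\<ge>n0. n \<ge> 1 \<longrightarrow>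
          log 2 (real (card (C1 n))) / real n \<le> R1 + \<gamma> \<and>
          log 2 (real (card (C2 n))) / real n \<le> R2 + \<gamma> \<and>
          err_prob n pX (phi1 n) (phi2 n) (psi n) \<le> \<epsilon> \<and>
          mutinf (cipher_joint n pX pK (Phi1 n) (Phi2 n)) \<le> \<delta>"
    using rates assms by blast
  then show ?thesis unfolding eventually_sequentially by (intro exI[of _ "max n0 1"]) auto
qed

lemma err_prob_eq_prob_decodable: "err_prob n pX (phi1 n) (phi2 n) (psi n) = 1 - measure_pmf.prob (iid n pX) (decodable n)"
proof -
  have "(\<lambda>zs. (map fst zs, map snd zs)) -` {(x1, x2). psi n (phi1 n x1) (phi2 n x2) \<noteq> (x1, x2)}
      = UNIV - decodable n"
    by (auto simp: decodable_def)
  then show ?thesis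
    using measure_pmf.prob_compl[of "decodable n" "iid n pX"] by (simp add: err_prob_def)
qed

lemma eventually_prob_decodable: "\<forall>\<^sub>F n in sequentially. 1 - \<epsilon> \<le> measure_pmf.prob (iid n pX) (decodable n)"
  using eventually_rates[OF zero_less_one] by eventually_elim (simp add: err_prob_eq_prob_decodable)

lemma eventually_mutinf_le: "\<forall>\<^sub>F n in sequentially. mutinf (cipher_joint n pX pK (Phi1 n) (Phi2 n)) \<le> \<delta>"
  using eventually_rates[OF zero_less_one] by eventually_elim simp

lemma eventually_card_C1_le:
  "0 < \<gamma> \<Longrightarrow> \<forall>\<^sub>F n in sequentially. real (card (C1 n)) \<le> 2 powr (real n * (R1 + \<gamma>))"
  using eventually_rates by (rule eventually_mono) (auto intro: card_le_powr_of_log_le)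

lemma eventually_card_C2_le:
  "0 < \<gamma> \<Longrightarrow> \<forall>\<^sub>F n in sequentially. real (card (C2 n)) \<le> 2 powr (real n * (R2 + \<gamma>))"
  using eventually_rates by (rule eventually_mono) (auto intro: card_le_powr_of_log_le)

lemma inj_on_decodable:
  assumes "1 \<le> n" "length k1 = n" "length k2 = n"
  shows "inj_on (\<lambda>zs. (Phi1 n k1 (map fst zs), Phi2 n k2 (map snd zs))) (lists_of_length n \<inter> decodable n)"
proof (rule inj_onI)
  fix zs zs' assume zs: "zs \<in> lists_of_length n \<inter> decodable n" and zs': "zs' \<in> lists_of_length n \<inter> decodable n"
    and eq: "(Phi1 n k1 (map fst zs), Phi2 n k2 (map snd zs)) = (Phi1 n k1 (map fst zs'), Phi2 n k2 (map snd zs'))"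
  have sys: "is_system n (C1 n) (C2 n) (Phi1 n) (Phi2 n) (Psi n) (phi1 n) (phi2 n) (psi n)"
    using systems assms(1) by blast
  have "(map fst zs, map snd zs) = Psi n k1 k2 (Phi1 n k1 (map fst zs)) (Phi2 n k2 (map snd zs))"
    using sys zs assms by (simp add: is_system_def decodable_def lists_of_length_def)
  also have "\<dots> = (map fst zs', map snd zs')"
    using sys zs' assms eq by (simp add: is_system_def decodable_def lists_of_length_def)
  finally show "zs = zs'" using inj_map_fst_snd by (auto dest: injD)
qed

lemma inj_on_decodable_slice:
  assumes "1 \<le> n" "length k1 = n" "length ys = n"
  shows "inj_on (Phi1 n k1) {xs \<in> lists_of_length n. zip xs ys \<in> decodable n}"
proof (rule inj_onI)
  fix xs xs' assume xs: "xs \<in> {xs \<in> lists_of_length n. zip xs ys \<in> decodable n}"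
    and xs': "xs' \<in> {xs \<in> lists_of_length n. zip xs ys \<in> decodable n}" and "Phi1 n k1 xs = Phi1 n k1 xs'"
  moreover have "inj_on (\<lambda>zs. (Phi1 n k1 (map fst zs), Phi2 n (replicate n undefined) (map snd zs)))
      (lists_of_length n \<inter> decodable n)"
    using assms by (intro inj_on_decodable) auto
  ultimately have "zip xs ys = zip xs' ys"
    using xs xs' assms by (elim inj_onD) (auto simp: lists_of_length_def)
  then show "xs = xs'" using xs xs' assms by (metis (mono_tags) lists_of_length_def map_fst_zip mem_Collect_eq)
qed

lemma card_decodable_slice_le:
  assumes "1 \<le> n" "length ys = n"
  shows "real (card {xs \<in> lists_of_length n. zip xs ys \<in> decodable n}) \<le> real (card (C1 n))"
proof -
  have "is_system n (C1 n) (C2 n) (Phi1 n) (Phi2 n) (Psi n) (phi1 n) (phi2 n) (psi n)"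
    using systems assms(1) by blast
  then have "finite (C1 n)" "Phi1 n (replicate n undefined) ` {xs \<in> lists_of_length n. zip xs ys \<in> decodable n} \<subseteq> C1 n"
    by (auto simp: is_system_def lists_of_length_def)
  then show ?thesis
    using assms inj_on_decodable_slice[of n "replicate n undefined" ys] by (simp add: card_inj_on_le)
qed

lemma R1_ge_cond_ent: "ent pX - ent (map_pmf snd pX) \<le> R1"
proof -
  have fac: "\<forall>z. pmf pX z = pmf (map_pmf snd pX) (snd z) * (pmf pX z / pmf (map_pmf snd pX) (snd z))"
    using pmf_eq_mult_cond[of pX _ snd] by blast
  have "log_loss pX (\<lambda>z. pmf pX z / pmf (map_pmf snd pX) (snd z)) \<le> R1"
  proof (rule log_loss_le_rate[OF eps_less_1 eventually_prob_decodable fac])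
    fix \<gamma> :: real assume "0 < \<gamma>"
    show "\<forall>\<^sub>F n in sequentially. (\<Sum>zs\<in>lists_of_length n \<inter> decodable n.
        prod_list (map (\<lambda>z. pmf (map_pmf snd pX) (snd z)) zs)) \<le> 2 powr (real n * (R1 + \<gamma>))"
      using eventually_card_C1_le[OF \<open>0 < \<gamma>\<close>] eventually_ge_at_top[of 1]
    proof eventually_elim
      case (elim n)
      have "(\<Sum>zs\<in>lists_of_length n \<inter> decodable n. prod_list (map (\<lambda>z. pmf (map_pmf snd pX) (snd z)) zs))
          \<le> real (card (C1 n))"
        using card_decodable_slice_le elim(2) by (intro sum_prod_pmf_snd_le) (auto simp: lists_of_length_def)
      with elim(1) show ?case by linarith
    qed
  qed (auto simp: divide_nonneg_nonneg)
  then show ?thesis by (simp add: log_loss_cond)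
qed

lemma R1_R2_ge_ent: "ent pX \<le> R1 + R2"
proof -
  have "log_loss pX (pmf pX) \<le> R1 + R2"
  proof (rule log_loss_le_rate[OF eps_less_1 eventually_prob_decodable, where w = "\<lambda>_. 1"])
    fix \<gamma> :: real assume "0 < \<gamma>"
    then have "0 < \<gamma> / 2" by simp
    show "\<forall>\<^sub>F n in sequentially. (\<Sum>zs\<in>lists_of_length n \<inter> decodable n. prod_list (map (\<lambda>_. 1) zs))
        \<le> 2 powr (real n * (R1 + R2 + \<gamma>))"
      using eventually_card_C1_le[OF \<open>0 < \<gamma> / 2\<close>] eventually_card_C2_le[OF \<open>0 < \<gamma> / 2\<close>]
        eventually_ge_at_top[of 1]
    proof eventually_elim
      case (elim n)
      let ?k = "replicate n undefined"
      have "is_system n (C1 n) (C2 n) (Phi1 n) (Phi2 n) (Psi n) (phi1 n) (phi2 n) (psi n)"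
        using systems elim(3) by blast
      then have "finite (C1 n \<times> C2 n)"
        "(\<lambda>zs. (Phi1 n ?k (map fst zs), Phi2 n ?k (map snd zs))) ` (lists_of_length n \<inter> decodable n) \<subseteq> C1 n \<times> C2 n"
        by (auto simp: is_system_def lists_of_length_def)
      then have "card (lists_of_length n \<inter> decodable n) \<le> card (C1 n \<times> C2 n)"
        using inj_on_decodable[of n ?k ?k] elim(3) by (intro card_inj_on_le) auto
      then have "(\<Sum>zs\<in>lists_of_length n \<inter> decodable n. prod_list (map (\<lambda>_. 1) zs))
          \<le> real (card (C1 n)) * real (card (C2 n))"
        by (simp add: map_replicate_const card_cartesian_product flip: of_nat_mult)
      also have "\<dots> \<le> 2 powr (real n * (R1 + \<gamma> / 2)) * 2 powr (real n * (R2 + \<gamma> / 2))"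
        using elim by (intro mult_mono) auto
      also have "\<dots> = 2 powr (real n * (R1 + R2 + \<gamma>))"
        by (simp add: powr_add[symmetric] algebra_simps)
      finally show ?case .
    qed
  qed auto
  then show ?thesis by (simp add: ent_eq_log_loss)
qed

lemma card_compatible_decodable_slice_le:
  fixes c :: "nat \<times> nat"
  assumes "1 \<le> n" "0 < \<tau>" "ys \<in> lists_of_length n"
  defines "V \<equiv> compatible_plaintexts (encrypt (Phi1 n) (Phi2 n))
    {ks \<in> lists_of_length n. \<tau> \<le> prod_list (map (\<lambda>z. pmf (map_pmf fst pK) (fst z)) ks)}
    (lists_of_length n \<inter> decodable n) c"
  shows "real (card {xs \<in> lists_of_length n. zip xs ys \<in> V}) \<le> 1 / \<tau>"
proof -
  define K1 where "K1 = {k1 \<in> lists_of_length n. \<tau> \<le> prod_list (map (pmf (map_pmf fst pK)) k1)}"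
  let ?slice = "{xs \<in> lists_of_length n. zip xs ys \<in> decodable n}"
  have "{xs \<in> lists_of_length n. zip xs ys \<in> V} \<subseteq> compatible_plaintexts (Phi1 n) K1 ?slice (fst c)"
  proof clarify
    fix xs assume xs: "xs \<in> lists_of_length n" "zip xs ys \<in> V"
    then obtain ks where ks: "ks \<in> lists_of_length n" "\<tau> \<le> prod_list (map (\<lambda>z. pmf (map_pmf fst pK) (fst z)) ks)"
      "encrypt (Phi1 n) (Phi2 n) ks (zip xs ys) = c" and "zip xs ys \<in> decodable n"
      by (auto simp: V_def compatible_plaintexts_def)
    moreover have "map fst (zip xs ys) = xs" using xs(1) assms(3) by (simp add: lists_of_length_def)
    ultimately have "Phi1 n (map fst ks) xs = fst c" "map fst ks \<in> K1"
      by (auto simp: encrypt_def K1_def lists_of_length_def comp_def)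
    then show "xs \<in> compatible_plaintexts (Phi1 n) K1 ?slice (fst c)"
      using xs \<open>zip xs ys \<in> decodable n\<close> by (auto simp: compatible_plaintexts_def)
  qed
  then have "card {xs \<in> lists_of_length n. zip xs ys \<in> V} \<le> card (compatible_plaintexts (Phi1 n) K1 ?slice (fst c))"
    by (rule card_mono[rotated]) (auto intro: finite_subset[of _ "lists_of_length n"] simp: compatible_plaintexts_def)
  also have "\<dots> \<le> card K1"
    using assms(1,3) by (intro card_compatible_plaintexts_le ballI inj_on_decodable_slice)
      (auto simp: K1_def lists_of_length_def intro: finite_subset[OF _ finite_lists_of_length])
  finally show ?thesis
    using card_heavy_lists_le[OF \<open>0 < \<tau>\<close>, of n "map_pmf fst pK"] by (simp add: K1_def)
qed

lemma key_fst_ent_ge: "ent pX - ent (map_pmf snd pX) \<le> ent (map_pmf fst pK)"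
proof -
  have fac: "\<forall>z. pmf pX z = pmf (map_pmf snd pX) (snd z) * (pmf pX z / pmf (map_pmf snd pX) (snd z))"
    using pmf_eq_mult_cond[of pX _ snd] by blast
  let ?gK = "\<lambda>z. pmf (map_pmf fst pK) (fst z)"
  have gKpos: "\<forall>z. 0 < pmf pK z \<longrightarrow> 0 < ?gK z"
    by (meson order_less_le_trans pmf_le_pmf_map)
  have "log_loss pX (\<lambda>z. pmf pX z / pmf (map_pmf snd pX) (snd z)) \<le> log_loss pK ?gK"
  proof (rule log_loss_le_key_log_loss[OF eps_less_1 eventually_prob_decodable eventually_mutinf_le fac
        _ _ _ gKpos])
    show "\<forall>\<^sub>F n in sequentially. \<forall>\<tau>>0. \<forall>c. (\<Sum>zs\<in>compatible_plaintexts (encrypt (Phi1 n) (Phi2 n))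
        {ks \<in> lists_of_length n. \<tau> \<le> prod_list (map ?gK ks)} (lists_of_length n \<inter> decodable n) c.
        prod_list (map (\<lambda>z. pmf (map_pmf snd pX) (snd z)) zs)) \<le> 1 / \<tau>"
      using eventually_ge_at_top[of 1]
    proof eventually_elim
      case (elim n)
      show ?case
      proof (intro allI impI)
        fix \<tau> :: real and c :: "nat \<times> nat" assume "0 < \<tau>"
        let ?V = "compatible_plaintexts (encrypt (Phi1 n) (Phi2 n))
          {ks \<in> lists_of_length n. \<tau> \<le> prod_list (map ?gK ks)} (lists_of_length n \<inter> decodable n) c"
        have "lists_of_length n \<inter> ?V = ?V" by (auto simp: compatible_plaintexts_def)
        then show "(\<Sum>zs\<in>?V. prod_list (map (\<lambda>z. pmf (map_pmf snd pX) (snd z)) zs)) \<le> 1 / \<tau>"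
          using sum_prod_pmf_snd_le[of n ?V "1 / \<tau>" "map_pmf snd pX"]
            card_compatible_decodable_slice_le[OF elim \<open>0 < \<tau>\<close>] by simp
      qed
    qed
  qed (auto simp: divide_nonneg_nonneg)
  then show ?thesis by (simp add: log_loss_cond log_loss_pmf_map)
qed

lemma key_ent_ge: "ent pX \<le> ent pK"
proof -
  have "log_loss pX (pmf pX) \<le> log_loss pK (pmf pK)"
  proof (rule log_loss_le_key_log_loss[OF eps_less_1 eventually_prob_decodable eventually_mutinf_le,
        where w = "\<lambda>_. 1"])
    show "\<forall>\<^sub>F n in sequentially. \<forall>\<tau>>0. \<forall>c. (\<Sum>zs\<in>compatible_plaintexts (encrypt (Phi1 n) (Phi2 n))
        {ks \<in> lists_of_length n. \<tau> \<le> prod_list (map (pmf pK) ks)} (lists_of_length n \<inter> decodable n) c.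
        prod_list (map (\<lambda>_. 1) zs)) \<le> 1 / \<tau>"
      using eventually_ge_at_top[of 1]
    proof eventually_elim
      case (elim n)
      show ?case
      proof (intro allI impI)
        fix \<tau> :: real and c :: "nat \<times> nat" assume "0 < \<tau>"
        define K where "K = {ks \<in> lists_of_length n. \<tau> \<le> prod_list (map (pmf pK) ks)}"
        have "inj_on (encrypt (Phi1 n) (Phi2 n) ks) (lists_of_length n \<inter> decodable n)" if "ks \<in> K" for ks
          using inj_on_decodable[of n "map fst ks" "map snd ks"] elim that
          unfolding encrypt_def by (simp add: K_def lists_of_length_def)
        moreover have "finite K" unfolding K_def by (rule finite_subset[of _ "lists_of_length n"]) auto
        ultimately have "card (compatible_plaintexts (encrypt (Phi1 n) (Phi2 n)) K (lists_of_length n \<inter> decodable n) c)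
            \<le> card K"
          by (intro card_compatible_plaintexts_le) auto
        then show "(\<Sum>zs\<in>compatible_plaintexts (encrypt (Phi1 n) (Phi2 n)) K (lists_of_length n \<inter> decodable n) c.
            prod_list (map (\<lambda>_. 1) zs)) \<le> 1 / \<tau>"
          using card_heavy_lists_le[OF \<open>0 < \<tau>\<close>, of n pK] by (simp add: map_replicate_const K_def)
      qed
    qed
  qed auto
  then show ?thesis by (simp add: ent_eq_log_loss)
qed

lemma swapped:
  "reliable_secure_code (map_pmf prod.swap pX) (map_pmf prod.swap pK) \<epsilon> \<delta> R2 R1 C2 C1 Phi2 Phi1
    (\<lambda>n k2 k1 c2 c1. prod.swap (Psi n k1 k2 c1 c2)) phi2 phi1 (\<lambda>n m2 m1. prod.swap (psi n m1 m2))"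
proof
  show "\<epsilon> < 1" by (rule eps_less_1)
  show "\<forall>n\<ge>1. is_system n (C2 n) (C1 n) (Phi2 n) (Phi1 n) (\<lambda>k2 k1 c2 c1. prod.swap (Psi n k1 k2 c1 c2))
      (phi2 n) (phi1 n) (\<lambda>m2 m1. prod.swap (psi n m1 m2))"
    using systems by (auto intro: is_system_swap)
  show "\<forall>\<gamma>>0. \<exists>n0. \<forall>n\<ge>n0. n \<ge> 1 \<longrightarrow>
      log 2 (real (card (C2 n))) / real n \<le> R2 + \<gamma> \<and>
      log 2 (real (card (C1 n))) / real n \<le> R1 + \<gamma> \<and>
      err_prob n (map_pmf prod.swap pX) (phi2 n) (phi1 n) (\<lambda>m2 m1. prod.swap (psi n m1 m2)) \<le> \<epsilon> \<and>
      mutinf (cipher_joint n (map_pmf prod.swap pX) (map_pmf prod.swap pK) (Phi2 n) (Phi1 n)) \<le> \<delta>"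
    using rates by (simp add: err_prob_swap cipher_joint_swap mutinf_map_prod_inj) blast
qed

lemma R2_ge_cond_ent: "ent pX - ent (map_pmf fst pX) \<le> R2"
  using reliable_secure_code.R1_ge_cond_ent[OF swapped] by (simp add: pmf.map_comp comp_def ent_map_pmf_inj)

lemma key_snd_ent_ge: "ent pX - ent (map_pmf fst pX) \<le> ent (map_pmf snd pK)"
  using reliable_secure_code.key_fst_ent_ge[OF swapped] by (simp add: pmf.map_comp comp_def ent_map_pmf_inj)

end

lemma R_key_Int_R_sw_nonempty:
  fixes pX pK :: "('a::finite \<times> 'b::finite) pmf"
  assumes "ent pX - ent (map_pmf snd pX) \<le> ent (map_pmf fst pK)"
    and "ent pX - ent (map_pmf fst pX) \<le> ent (map_pmf snd pK)"
    and "ent pX \<le> ent pK"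
  shows "R_key pK \<inter> R_sw pX \<noteq> {}"
proof -
  define r1 where "r1 = max (ent pX - ent (map_pmf snd pX)) (ent pX - ent (map_pmf snd pK))"
  define r2 where "r2 = max (ent pX - ent (map_pmf fst pX)) (ent pX - r1)"
  have "(r1, r2) \<in> R_key pK \<inter> R_sw pX"
    using assms ent_subadditive[of pX] ent_subadditive[of pK]
    by (auto simp: R_key_def R_sw_def r1_def r2_def max_def)
  then show ?thesis by blast
qed

theorem theorem3:
  fixes pX pK :: "('a::{field,finite} \<times> 'b::{field,finite}) pmf"
    and \<delta>0 \<epsilon> \<delta> :: real
  assumes "\<delta>0 > 0"
    and "0 < \<epsilon>" and "\<epsilon> < 1"
    and "0 \<le> \<delta>" and "\<delta> \<le> \<delta>0"
  shows "reliable_secure_region \<epsilon> \<delta> pX pK \<subseteq> R_out pX pK"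
proof
  fix r assume "r \<in> reliable_secure_region \<epsilon> \<delta> pX pK"
  then obtain R1 R2 C1 C2 Phi1 Phi2 Psi phi1 phi2 psi where r: "r = (R1, R2)"
    and code: "reliable_secure_code pX pK \<epsilon> \<delta> R1 R2 C1 C2 Phi1 Phi2 Psi phi1 phi2 psi"
    using \<open>\<epsilon> < 1\<close> unfolding reliable_secure_region_def reliable_secure_code_def by blast
  interpret reliable_secure_code pX pK \<epsilon> \<delta> R1 R2 C1 C2 Phi1 Phi2 Psi phi1 phi2 psi
    by (rule code)
  have "(R1, R2) \<in> R_sw pX"
    using R1_ge_cond_ent R2_ge_cond_ent R1_R2_ge_ent by (simp add: R_sw_def)
  moreover have "R_key pK \<inter> R_sw pX \<noteq> {}"
    using key_fst_ent_ge key_snd_ent_ge key_ent_ge by (rule R_key_Int_R_sw_nonempty)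
  ultimately show "r \<in> R_out pX pK" by (simp add: R_out_def r)
qed

end
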